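(* Let $(X,G)$ be a free exact $G$-odometer. Then its topological full group $[[G]]$ is amenable if and only if $G$ is amenable.
   Context: Exact $G$-odometer: for a decreasing sequence of finite-index normal subgroups $G_0\supseteq G_1\supseteq\cdots$ of a countable group $G$, the inverse limit $\varprojlim(G/G_n,\pi_n)$ under the natural quotient maps, with $G$ acting by left multiplication coordinatewise. Free: $g\cdot x=x$ implies $g=e$. Topological full group $[[G]]$: all homeomorphisms $s$ of $X$ such that every $x\in X$ has a clopen neighborhood $U$ and some $g\in G$ with $s(y)=g\cdot y$ for $y\in U$. *)

theory Defs
  imports "HOL-Analysis.Analysis" "HOL-Algebra.Coset"
begin

definition amenable :: "('a, 'b) monoid_scheme \<Rightarrow> bool" where
  "amenable H \<longleftrightarrow> (\<exists>\<mu> :: 'a set \<Rightarrow> real.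
      \<mu> (carrier H) = 1 \<and>
      (\<forall>A. A \<subseteq> carrier H \<longrightarrow> 0 \<le> \<mu> A) \<and>
      (\<forall>A B. A \<subseteq> carrier H \<longrightarrow> B \<subseteq> carrier H \<longrightarrow> A \<inter> B = {} \<longrightarrow>
              \<mu> (A \<union> B) = \<mu> A + \<mu> B) \<and>
      (\<forall>g \<in> carrier H. \<forall>A. A \<subseteq> carrier H \<longrightarrow> \<mu> (g <#\<^bsub>H\<^esub> A) = \<mu> A))"

text \<open>The odometer: points are compatible sequences of cosets x n \<in> G/G_n with
 x (Suc n) \<subseteq> x n (i.e. \<pi>_n (x (Suc n)) = x n).\<close>
definition odometer_space :: "('a, 'b) monoid_scheme \<Rightarrow> (nat \<Rightarrow> 'a set) \<Rightarrow> (nat \<Rightarrow> 'a set) set" where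
  "odometer_space G Gs = {x. (\<forall>n. x n \<in> rcosets\<^bsub>G\<^esub> (Gs n)) \<and> (\<forall>n. x (Suc n) \<subseteq> x n)}"

definition odometer_topology :: "('a, 'b) monoid_scheme \<Rightarrow> (nat \<Rightarrow> 'a set) \<Rightarrow> (nat \<Rightarrow> 'a set) topology" where
  "odometer_topology G Gs =
     subtopology (product_topology (\<lambda>n. discrete_topology (rcosets\<^bsub>G\<^esub> (Gs n))) UNIV)
                 (odometer_space G Gs)"

definition odometer_action :: "('a, 'b) monoid_scheme \<Rightarrow> 'a \<Rightarrow> (nat \<Rightarrow> 'a set) \<Rightarrow> (nat \<Rightarrow> 'a set)" where
  "odometer_action G g x = (\<lambda>n. g <#\<^bsub>G\<^esub> x n)"

definition topological_full_group ::
  "('a, 'b) monoid_scheme \<Rightarrow> (nat \<Rightarrow> 'a set) \<Rightarrow> ((nat \<Rightarrow> 'a set) \<Rightarrow> (nat \<Rightarrow> 'a set)) monoid" where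
  "topological_full_group G Gs =
     \<lparr> carrier = {s. homeomorphic_map (odometer_topology G Gs) (odometer_topology G Gs) s \<and>
                    (\<forall>x. x \<notin> odometer_space G Gs \<longrightarrow> s x = x) \<and>
                    (\<forall>x \<in> odometer_space G Gs. \<exists>U g.
                        openin (odometer_topology G Gs) U \<and> closedin (odometer_topology G Gs) U \<and>
                        x \<in> U \<and> g \<in> carrier G \<and>
                        (\<forall>y \<in> U. s y = odometer_action G g y))},
       monoid.mult = (\<lambda>s t. s \<circ> t),
       one = id \<rparr>"

end

theory Submission
  imports Defs
begin

text \<open>
  If the topological full group \<open>[[G]]\<close> is amenable then so is \<open>G\<close>: by freeness, translation by
  \<open>g\<close> on \<open>X\<close> is an injective homomorphism from \<open>G\<close> into \<open>[[G]]\<close>, and subgroups of amenable groups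
  are amenable.

  Conversely, by compactness of \<open>X\<close> every element of \<open>[[G]]\<close> acts on each cylinder of some fixed
  level \<open>n\<close> by a single element of \<open>G\<close>, so \<open>[[G]]\<close> is exhausted by the subgroups \<open>[[G]]\<^sub>n\<close> of such
  elements and it suffices that each \<open>[[G]]\<^sub>n\<close> is amenable. Let \<open>F\<^sub>D\<close> be the subgroup of \<open>[[G]]\<^sub>n\<close>
  fixing the cylinders over a set \<open>D\<close> of cosets of \<open>G\<^sub>n\<close> pointwise. For a further coset \<open>C\<close>,
  \<open>F\<^sub>D\<close> permutes the finite orbit of \<open>C\<close>, and the stabiliser of \<open>C\<close> maps homomorphically to \<open>G\<close>
  by the element it applies over \<open>C\<close> (unique by freeness), with kernel \<open>F\<^bsub>D \<union> {C}\<^esub>\<close>. Both steps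
  are instances of one principle: a group acting transitively on a set with an invariant mean is
  amenable if the stabiliser of a point is. So \<open>F\<^sub>D\<close> is amenable if \<open>G\<close> and \<open>F\<^bsub>D \<union> {C}\<^esub>\<close> are, and
  induction from the trivial group \<open>F\<^bsub>G/G\<^sub>n\<^esub>\<close> down to \<open>F\<^bsub>{}\<^esub> = [[G]]\<^sub>n\<close> concludes.
\<close>

section \<open>Finitely additive means\<close>

locale finitely_additive_mean =
  fixes Y :: "'y set" and \<nu> :: "'y set \<Rightarrow> real"
  assumes additive: "\<And>A B. A \<subseteq> Y \<Longrightarrow> B \<subseteq> Y \<Longrightarrow> A \<inter> B = {} \<Longrightarrow> \<nu> (A \<union> B) = \<nu> A + \<nu> B"
    and nonneg: "\<And>A. A \<subseteq> Y \<Longrightarrow> 0 \<le> \<nu> A"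
    and total: "\<nu> Y = 1"
begin

lemma mean_empty: "\<nu> {} = 0"
  using additive[of "{}" "{}"] by simp

lemma mean_Int_Diff: "A \<subseteq> Y \<Longrightarrow> \<nu> A = \<nu> (A \<inter> B) + \<nu> (A - B)"
  using additive[of "A \<inter> B" "A - B"] by (auto simp: Int_Diff_Un)

lemma mean_mono: "A \<subseteq> B \<Longrightarrow> B \<subseteq> Y \<Longrightarrow> \<nu> A \<le> \<nu> B"
  using mean_Int_Diff[of B A] nonneg[of "B - A"] by (auto simp: Int_absorb1)

lemma mean_le_one: "A \<subseteq> Y \<Longrightarrow> \<nu> A \<le> 1"
  using mean_mono[of A Y] total by simp

text \<open>The integral of a bounded function against \<open>\<nu>\<close> is squeezed between the integrals of
  step functions below and above it; a step function is a list of (height, support) pairs.\<close>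

definition step_fun :: "(real \<times> 'y set) list \<Rightarrow> 'y \<Rightarrow> real" where
  "step_fun L y = (\<Sum>p\<leftarrow>L. if y \<in> snd p then fst p else 0)"

definition step_integral :: "'y set \<Rightarrow> (real \<times> 'y set) list \<Rightarrow> real" where
  "step_integral W L = (\<Sum>p\<leftarrow>L. fst p * \<nu> (snd p \<inter> W))"

lemma step_fun_simps [simp]:
  "step_fun [] y = 0"
  "step_fun (p # L) y = (if y \<in> snd p then fst p else 0) + step_fun L y"
  "step_fun (L1 @ L2) y = step_fun L1 y + step_fun L2 y"
  by (simp_all add: step_fun_def)

lemma step_integral_simps [simp]:
  "step_integral W [] = 0"
  "step_integral W (p # L) = fst p * \<nu> (snd p \<inter> W) + step_integral W L"
  "step_integral W (L1 @ L2) = step_integral W L1 + step_integral W L2"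
  by (simp_all add: step_integral_def)

lemma step_integral_Int_Diff:
  "W \<subseteq> Y \<Longrightarrow> step_integral W L = step_integral (W \<inter> C) L + step_integral (W - C) L"
proof (induction L)
  case (Cons p L)
  have "\<nu> (snd p \<inter> W) = \<nu> (snd p \<inter> (W \<inter> C)) + \<nu> (snd p \<inter> (W - C))"
    using mean_Int_Diff[of "snd p \<inter> W" C] Cons.prems by (auto simp: Int_assoc Int_Diff)
  then show ?case using Cons by (simp add: algebra_simps)
qed simp

lemma step_integral_ge:
  "W \<subseteq> Y \<Longrightarrow> (\<forall>y\<in>W. d \<le> step_fun L y) \<Longrightarrow> d * \<nu> W \<le> step_integral W L"
proof (induction L arbitrary: d W)
  case Nil
  then have "W = {} \<or> d \<le> 0" by auto
  then show ?case using nonneg[OF Nil(1)] by (auto simp: mean_empty mult_nonpos_nonneg)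
next
  case (Cons p L)
  obtain c B where p: "p = (c, B)" by force
  have "\<forall>y\<in>W \<inter> B. d - c \<le> step_fun L y" using Cons.prems(2) p by auto
  then have "(d - c) * \<nu> (W \<inter> B) \<le> step_integral (W \<inter> B) L"
    using Cons.IH Cons.prems(1) by blast
  moreover have "\<forall>y\<in>W - B. d \<le> step_fun L y" using Cons.prems(2) p by auto
  then have "d * \<nu> (W - B) \<le> step_integral (W - B) L"
    using Cons.IH Cons.prems(1) by blast
  moreover have "\<nu> W = \<nu> (W \<inter> B) + \<nu> (W - B)"
    using mean_Int_Diff Cons.prems by blast
  moreover have "step_integral W L = step_integral (W \<inter> B) L + step_integral (W - B) L"
    using step_integral_Int_Diff Cons.prems by blast
  ultimately show ?case using p by (simp add: algebra_simps Int_commute)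
qed

definition step_neg :: "(real \<times> 'y set) list \<Rightarrow> (real \<times> 'y set) list" where
  "step_neg L = map (\<lambda>p. (- fst p, snd p)) L"

lemma step_fun_neg [simp]: "step_fun (step_neg L) y = - step_fun L y"
  by (induction L) (auto simp: step_neg_def)

lemma step_integral_neg [simp]: "step_integral W (step_neg L) = - step_integral W L"
  by (induction L) (auto simp: step_neg_def)

lemma step_integral_mono:
  "\<forall>y\<in>Y. step_fun L1 y \<le> step_fun L2 y \<Longrightarrow> step_integral Y L1 \<le> step_integral Y L2"
  using step_integral_ge[of Y 0 "L2 @ step_neg L1"] by auto

definition lower_sums :: "('y \<Rightarrow> real) \<Rightarrow> real set" where
  "lower_sums f = {step_integral Y L | L. \<forall>y\<in>Y. step_fun L y \<le> f y}"

definition upper_sums :: "('y \<Rightarrow> real) \<Rightarrow> real set" where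
  "upper_sums f = {step_integral Y L | L. \<forall>y\<in>Y. f y \<le> step_fun L y}"

definition mean_integral :: "('y \<Rightarrow> real) \<Rightarrow> real" where
  "mean_integral f = Sup (lower_sums f)"

definition nonneg_bounded :: "('y \<Rightarrow> real) \<Rightarrow> real \<Rightarrow> bool" where
  "nonneg_bounded f M \<longleftrightarrow> (\<forall>y\<in>Y. 0 \<le> f y \<and> f y \<le> M)"

lemma lower_le_upper:
  assumes "l \<in> lower_sums f" "u \<in> upper_sums f"
  shows "l \<le> u"
proof -
  obtain L1 L2 where "l = step_integral Y L1" "\<forall>y\<in>Y. step_fun L1 y \<le> f y"
    "u = step_integral Y L2" "\<forall>y\<in>Y. f y \<le> step_fun L2 y"
    using assms unfolding lower_sums_def upper_sums_def by blast
  then show ?thesis using step_integral_mono[of L1 L2] by force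
qed

lemma const_in_upper_sums: "0 \<le> c \<Longrightarrow> \<forall>y\<in>Y. f y \<le> c \<Longrightarrow> c \<in> upper_sums f"
  unfolding upper_sums_def using total by (intro CollectI exI[of _ "[(c, Y)]"]) auto

lemma zero_in_lower_sums: "\<forall>y\<in>Y. 0 \<le> f y \<Longrightarrow> 0 \<in> lower_sums f"
  unfolding lower_sums_def by (intro CollectI exI[of _ "[]"]) auto

lemma lower_le_integral:
  assumes "nonneg_bounded f M" "l \<in> lower_sums f"
  shows "l \<le> mean_integral f"
proof -
  have "max M 0 \<in> upper_sums f"
    using assms(1) unfolding nonneg_bounded_def by (intro const_in_upper_sums) auto
  then have "bdd_above (lower_sums f)" using lower_le_upper by (meson bdd_aboveI)
  then show ?thesis unfolding mean_integral_def using assms(2) by (simp add: cSup_upper)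
qed

lemma integral_le_upper:
  assumes "nonneg_bounded f M" "u \<in> upper_sums f"
  shows "mean_integral f \<le> u"
proof -
  have "lower_sums f \<noteq> {}"
    using zero_in_lower_sums assms(1) unfolding nonneg_bounded_def by blast
  then show ?thesis
    unfolding mean_integral_def using lower_le_upper assms(2) by (auto intro: cSup_least)
qed

lemma staircase_approximation:
  assumes "nonneg_bounded f M" "k > 0"
  defines "L \<equiv> map (\<lambda>j. (M / real k, {y. real (Suc j) * M / real k \<le> f y})) [0..<k]"
  shows "\<forall>y\<in>Y. step_fun L y \<le> f y \<and> f y \<le> step_fun L y + M / real k"
proof
  fix y assume y: "y \<in> Y"
  have M: "M \<ge> 0" "0 \<le> f y" "f y \<le> M" using assms(1) y unfolding nonneg_bounded_def by auto
  have sf: "step_fun L y = (\<Sum>j<k. if real (Suc j) * M / real k \<le> f y then M / real k else 0)"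
    unfolding L_def step_fun_def map_map sum_set_upt_conv_sum_list_nat[symmetric]
    by (simp add: o_def atLeast0LessThan cong: if_cong)
  show "step_fun L y \<le> f y \<and> f y \<le> step_fun L y + M / real k"
  proof (cases "M = 0")
    case True then show ?thesis using sf M by simp
  next
    case False
    with M have Mp: "M > 0" by simp
    define t where "t = f y * real k / M"
    have t: "0 \<le> t" "t \<le> real k" using M Mp assms(2) by (auto simp: t_def field_simps)
    have step_iff: "real (Suc j) * M / real k \<le> f y \<longleftrightarrow> real (Suc j) \<le> t" for j
      using Mp assms(2) by (simp add: t_def field_simps)
    define q where "q = nat \<lfloor>t\<rfloor>"
    have q: "real q \<le> t" "t < real q + 1" "q \<le> k" using t unfolding q_def
      by (auto simp: floor_le_iff) (linarith+)
    have "{j. j < k \<and> real (Suc j) \<le> t} = {..<q}"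
      using q by (auto simp: q_def le_nat_floor) (linarith+)
    then have "step_fun L y = M / real k * real q"
      unfolding sf step_iff by (simp add: sum.If_cases Int_def lessThan_def)
    moreover have "f y = M / real k * t" using Mp assms(2) by (simp add: t_def)
    moreover have "M / real k * real q \<le> M / real k * t"
      using q Mp assms(2) by (intro mult_left_mono) auto
    moreover have "M / real k * t \<le> M / real k * (real q + 1)"
      using q Mp assms(2) by (intro mult_left_mono) auto
    ultimately show ?thesis by (simp add: distrib_left)
  qed
qed

lemma lower_upper_close:
  assumes "nonneg_bounded f M" "e > 0"
  shows "\<exists>l u. l \<in> lower_sums f \<and> u \<in> upper_sums f \<and> u - l < e"
proof (cases "Y = {}")
  case True
  then have "0 \<in> lower_sums f" "0 \<in> upper_sums f"
    unfolding lower_sums_def upper_sums_def by (auto intro!: exI[of _ "[]"])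
  then show ?thesis using assms(2) by force
next
  case False
  then have M: "M \<ge> 0" using assms(1) unfolding nonneg_bounded_def by force
  obtain k :: nat where k: "real k > M / e" using reals_Archimedean2 by blast
  then have kp: "k > 0" using M assms(2) by (metis divide_nonneg_pos not_gr_zero not_less of_nat_0)
  define L where "L \<equiv> map (\<lambda>j. (M / real k, {y. real (Suc j) * M / real k \<le> f y})) [0..<k]"
  have L: "\<forall>y\<in>Y. step_fun L y \<le> f y \<and> f y \<le> step_fun L y + M / real k"
    using staircase_approximation[OF assms(1) kp] unfolding L_def by blast
  have "step_integral Y L \<in> lower_sums f" using L unfolding lower_sums_def by blast
  moreover have "step_integral Y (L @ [(M / real k, Y)]) \<in> upper_sums f"
    using L unfolding upper_sums_def by (intro CollectI exI[of _ "L @ [(M / real k, Y)]"]) auto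
  moreover have "step_integral Y (L @ [(M / real k, Y)]) - step_integral Y L = M / real k"
    using total by simp
  moreover have "M / real k < e" using k kp assms(2) M by (simp add: field_simps)
  ultimately show ?thesis by metis
qed

lemma integral_eqI:
  assumes "nonneg_bounded f M"
    and "\<And>l. l \<in> lower_sums f \<Longrightarrow> l \<le> r" "\<And>u. u \<in> upper_sums f \<Longrightarrow> r \<le> u"
  shows "mean_integral f = r"
proof (rule ccontr)
  assume ne: "mean_integral f \<noteq> r"
  obtain l u where lu: "l \<in> lower_sums f" "u \<in> upper_sums f" "u - l < \<bar>mean_integral f - r\<bar>"
    using lower_upper_close[OF assms(1), of "\<bar>mean_integral f - r\<bar>"] ne by auto
  have "l \<le> mean_integral f" "mean_integral f \<le> u"
    using lower_le_integral integral_le_upper assms(1) lu by auto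
  moreover have "l \<le> r" "r \<le> u" using assms(2)[OF lu(1)] assms(3)[OF lu(2)] .
  ultimately show False using lu(3) by (auto simp: abs_if split: if_splits)
qed

lemma integral_nonneg: "nonneg_bounded f M \<Longrightarrow> 0 \<le> mean_integral f"
  using lower_le_integral zero_in_lower_sums unfolding nonneg_bounded_def by blast

lemma integral_const: "0 \<le> c \<Longrightarrow> \<forall>y\<in>Y. f y = c \<Longrightarrow> mean_integral f = c"
proof -
  assume c: "0 \<le> c" "\<forall>y\<in>Y. f y = c"
  have b: "nonneg_bounded f c" using c unfolding nonneg_bounded_def by auto
  have "step_integral Y [(c, Y)] = c" using total by simp
  moreover have "step_integral Y [(c, Y)] \<in> lower_sums f" "step_integral Y [(c, Y)] \<in> upper_sums f"
    using c unfolding lower_sums_def upper_sums_def by (auto intro!: exI[of _ "[(c, Y)]"])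
  ultimately show ?thesis using lower_le_integral[OF b] integral_le_upper[OF b] by (metis order_antisym)
qed

lemma lower_sums_add:
  assumes "l1 \<in> lower_sums f" "l2 \<in> lower_sums g"
  shows "l1 + l2 \<in> lower_sums (\<lambda>y. f y + g y)"
proof -
  obtain L1 L2 where "l1 = step_integral Y L1" "\<forall>y\<in>Y. step_fun L1 y \<le> f y"
    "l2 = step_integral Y L2" "\<forall>y\<in>Y. step_fun L2 y \<le> g y"
    using assms unfolding lower_sums_def by blast
  then show ?thesis unfolding lower_sums_def
    by (intro CollectI exI[of _ "L1 @ L2"]) (auto intro: add_mono)
qed

lemma upper_sums_add:
  assumes "u1 \<in> upper_sums f" "u2 \<in> upper_sums g"
  shows "u1 + u2 \<in> upper_sums (\<lambda>y. f y + g y)"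
proof -
  obtain L1 L2 where "u1 = step_integral Y L1" "\<forall>y\<in>Y. f y \<le> step_fun L1 y"
    "u2 = step_integral Y L2" "\<forall>y\<in>Y. g y \<le> step_fun L2 y"
    using assms unfolding upper_sums_def by blast
  then show ?thesis unfolding upper_sums_def
    by (intro CollectI exI[of _ "L1 @ L2"]) (auto intro: add_mono)
qed

lemma integral_add:
  assumes f: "nonneg_bounded f M" and g: "nonneg_bounded g N"
  shows "mean_integral (\<lambda>y. f y + g y) = mean_integral f + mean_integral g"
proof (rule ccontr)
  have fg: "nonneg_bounded (\<lambda>y. f y + g y) (M + N)"
    using f g unfolding nonneg_bounded_def by (auto intro: add_mono)
  assume ne: "mean_integral (\<lambda>y. f y + g y) \<noteq> mean_integral f + mean_integral g"
  define e where "e = \<bar>mean_integral (\<lambda>y. f y + g y) - (mean_integral f + mean_integral g)\<bar> / 2"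
  have e: "e > 0" using ne by (simp add: e_def)
  obtain l1 u1 where 1: "l1 \<in> lower_sums f" "u1 \<in> upper_sums f" "u1 - l1 < e"
    using lower_upper_close[OF f e] by blast
  obtain l2 u2 where 2: "l2 \<in> lower_sums g" "u2 \<in> upper_sums g" "u2 - l2 < e"
    using lower_upper_close[OF g e] by blast
  have "l1 \<le> mean_integral f" "mean_integral f \<le> u1" "l2 \<le> mean_integral g" "mean_integral g \<le> u2"
    using 1 2 lower_le_integral integral_le_upper f g by auto
  moreover have "l1 + l2 \<le> mean_integral (\<lambda>y. f y + g y)" "mean_integral (\<lambda>y. f y + g y) \<le> u1 + u2"
    using lower_le_integral[OF fg lower_sums_add[OF 1(1) 2(1)]]
      integral_le_upper[OF fg upper_sums_add[OF 1(2) 2(2)]] .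
  ultimately show False using 1(3) 2(3) unfolding e_def by (auto simp: abs_if split: if_splits)
qed

lemma integral_cong: "\<forall>y\<in>Y. f y = g y \<Longrightarrow> mean_integral f = mean_integral g"
  unfolding mean_integral_def lower_sums_def by (rule arg_cong[where f = Sup]) auto

lemma integral_compose_measure_preserving:
  assumes f: "nonneg_bounded f M" and \<phi>: "\<And>y. y \<in> Y \<Longrightarrow> \<phi> y \<in> Y"
    and preserving: "\<And>B. \<nu> {y\<in>Y. \<phi> y \<in> B} = \<nu> (B \<inter> Y)"
  shows "mean_integral (\<lambda>y. f (\<phi> y)) = mean_integral f"
proof -
  have f\<phi>: "nonneg_bounded (\<lambda>y. f (\<phi> y)) M" using f \<phi> unfolding nonneg_bounded_def by auto
  define pull :: "(real \<times> 'y set) list \<Rightarrow> (real \<times> 'y set) list"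
    where "pull L = map (\<lambda>p. (fst p, {y. \<phi> y \<in> snd p})) L" for L
  have fun_pull: "step_fun (pull L) y = step_fun L (\<phi> y)" for L y
    by (induction L) (auto simp: pull_def)
  have integral_pull: "step_integral Y (pull L) = step_integral Y L" for L
  proof (induction L)
    case (Cons p L)
    have "{y. \<phi> y \<in> snd p} \<inter> Y = {y\<in>Y. \<phi> y \<in> snd p}" by auto
    then show ?case using Cons preserving[of "snd p"] by (simp add: pull_def Int_commute)
  qed (simp add: pull_def)
  show ?thesis
  proof (rule integral_eqI[OF f, THEN sym])
    fix l assume "l \<in> lower_sums f"
    then obtain L where "l = step_integral Y L" "\<forall>y\<in>Y. step_fun L y \<le> f y"
      unfolding lower_sums_def by blast
    then have "l \<in> lower_sums (\<lambda>y. f (\<phi> y))"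
      unfolding lower_sums_def using fun_pull integral_pull \<phi>
      by (intro CollectI exI[of _ "pull L"]) simp
    then show "l \<le> mean_integral (\<lambda>y. f (\<phi> y))" using lower_le_integral[OF f\<phi>] by blast
  next
    fix u assume "u \<in> upper_sums f"
    then obtain L where "u = step_integral Y L" "\<forall>y\<in>Y. f y \<le> step_fun L y"
      unfolding upper_sums_def by blast
    then have "u \<in> upper_sums (\<lambda>y. f (\<phi> y))"
      unfolding upper_sums_def using fun_pull integral_pull \<phi>
      by (intro CollectI exI[of _ "pull L"]) simp
    then show "mean_integral (\<lambda>y. f (\<phi> y)) \<le> u" using integral_le_upper[OF f\<phi>] by blast
  qed
qed

end

section \<open>Amenability\<close>

lemma amenable_iff_invariant_mean:
  "amenable H \<longleftrightarrow> (\<exists>\<mu>. finitely_additive_mean (carrier H) \<mu> \<and>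
     (\<forall>g\<in>carrier H. \<forall>A. A \<subseteq> carrier H \<longrightarrow> \<mu> (g <#\<^bsub>H\<^esub> A) = \<mu> A))"
  unfolding amenable_def finitely_additive_mean_def by (intro ex_cong1) auto

lemma amenableI:
  "finitely_additive_mean (carrier H) \<mu> \<Longrightarrow>
   (\<And>g A. g \<in> carrier H \<Longrightarrow> A \<subseteq> carrier H \<Longrightarrow> \<mu> (g <#\<^bsub>H\<^esub> A) = \<mu> A) \<Longrightarrow> amenable H"
  unfolding amenable_iff_invariant_mean by blast

lemma amenableE:
  assumes "amenable H"
  obtains \<mu> where "finitely_additive_mean (carrier H) \<mu>"
    "\<And>g A. g \<in> carrier H \<Longrightarrow> A \<subseteq> carrier H \<Longrightarrow> \<mu> (g <#\<^bsub>H\<^esub> A) = \<mu> A"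
  using assms unfolding amenable_iff_invariant_mean by blast

lemma finitely_additive_mean_counting:
  assumes "finite Y" "Y \<noteq> {}"
  shows "finitely_additive_mean Y (\<lambda>B. real (card (B \<inter> Y)) / real (card Y))"
proof
  fix A B assume AB: "A \<subseteq> Y" "B \<subseteq> Y" "A \<inter> B = {}"
  then have "card ((A \<union> B) \<inter> Y) = card (A \<inter> Y) + card (B \<inter> Y)"
    using assms(1) by (simp add: Int_absorb2 card_Un_disjoint finite_subset)
  then show "real (card ((A \<union> B) \<inter> Y)) / real (card Y) =
      real (card (A \<inter> Y)) / real (card Y) + real (card (B \<inter> Y)) / real (card Y)"
    by (simp add: add_divide_distrib)
qed (use assms in simp_all)

lemma amenable_trivial:
  assumes "carrier H = {e}" "e \<otimes>\<^bsub>H\<^esub> e = e"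
  shows "amenable H"
proof (rule amenableI)
  show "finitely_additive_mean (carrier H) (\<lambda>A. real (card (A \<inter> carrier H)) / real (card (carrier H)))"
    using assms(1) by (intro finitely_additive_mean_counting) simp_all
  fix g A assume "g \<in> carrier H" "A \<subseteq> carrier H"
  then have "g = e" "A = {} \<or> A = {e}" using assms(1) by (auto simp: subset_singleton_iff)
  then have "g <#\<^bsub>H\<^esub> A = A" using assms(2) by (auto simp: l_coset_def)
  then show "real (card ((g <#\<^bsub>H\<^esub> A) \<inter> carrier H)) / real (card (carrier H)) =
      real (card (A \<inter> carrier H)) / real (card (carrier H))"
    by simp
qed

lemma (in group) l_coset_Int_subgroup:
  assumes "subgroup S G" "n \<in> S" "Z \<subseteq> carrier G"
  shows "(n <#\<^bsub>G\<^esub> Z) \<inter> S = n <#\<^bsub>G\<^esub> (Z \<inter> S)"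
proof (intro equalityI subsetI)
  fix x assume "x \<in> (n <#\<^bsub>G\<^esub> Z) \<inter> S"
  then obtain z where z: "z \<in> Z" "x \<in> S" "x = n \<otimes> z" unfolding l_coset_def by blast
  have "z = inv n \<otimes> x"
    using z assms subgroup.mem_carrier by (fastforce simp: m_assoc[symmetric])
  then have "z \<in> S" using z(2) assms(1,2) by (simp add: subgroup.m_closed subgroup.m_inv_closed)
  then show "x \<in> n <#\<^bsub>G\<^esub> (Z \<inter> S)" using z unfolding l_coset_def by blast
next
  fix x assume "x \<in> n <#\<^bsub>G\<^esub> (Z \<inter> S)"
  then obtain z where z: "z \<in> Z" "z \<in> S" "x = n \<otimes> z" unfolding l_coset_def by blast
  then have "x \<in> S" using assms(1,2) by (simp add: subgroup.m_closed)
  then show "x \<in> (n <#\<^bsub>G\<^esub> Z) \<inter> S" using z unfolding l_coset_def by blast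
qed

lemma (in group) l_coset_carrier_eq: "g \<in> carrier G \<Longrightarrow> g <#\<^bsub>G\<^esub> carrier G = carrier G"
proof
  assume g: "g \<in> carrier G"
  show "g <#\<^bsub>G\<^esub> carrier G \<subseteq> carrier G" using l_coset_subset_G[OF _ g] by simp
  show "carrier G \<subseteq> g <#\<^bsub>G\<^esub> carrier G"
  proof
    fix h assume h: "h \<in> carrier G"
    have "h = g \<otimes> (inv g \<otimes> h)" using g h by (simp add: m_assoc[symmetric])
    then show "h \<in> g <#\<^bsub>G\<^esub> carrier G" unfolding l_coset_def using g h by blast
  qed
qed

lemma (in group) l_coset_disjoint:
  assumes "g \<in> carrier G" "A \<subseteq> carrier G" "B \<subseteq> carrier G" "A \<inter> B = {}"
  shows "(g <#\<^bsub>G\<^esub> A) \<inter> (g <#\<^bsub>G\<^esub> B) = {}"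
proof (rule ccontr)
  assume "(g <#\<^bsub>G\<^esub> A) \<inter> (g <#\<^bsub>G\<^esub> B) \<noteq> {}"
  then obtain a b where ab: "a \<in> A" "b \<in> B" "g \<otimes> a = g \<otimes> b" unfolding l_coset_def by blast
  then have "a = b" using assms by (metis Units_eq Units_l_cancel subsetD)
  then show False using ab assms by blast
qed

locale transitive_action = group H for H (structure) +
  fixes act :: "'g \<Rightarrow> 'y \<Rightarrow> 'y" and Y :: "'y set" and y0 :: 'y
  assumes act_closed: "\<And>g y. g \<in> carrier H \<Longrightarrow> y \<in> Y \<Longrightarrow> act g y \<in> Y"
    and act_mult: "\<And>g h y. g \<in> carrier H \<Longrightarrow> h \<in> carrier H \<Longrightarrow> y \<in> Y \<Longrightarrow>
        act (g \<otimes> h) y = act g (act h y)"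
    and act_one: "\<And>y. y \<in> Y \<Longrightarrow> act \<one> y = y"
    and base_point: "y0 \<in> Y"
    and transitive: "\<And>y. y \<in> Y \<Longrightarrow> \<exists>h\<in>carrier H. act h y0 = y"
begin

definition stabiliser :: "'g set" where
  "stabiliser = {h \<in> carrier H. act h y0 = y0}"

lemma act_inv_act:
  assumes "g \<in> carrier H" "y \<in> Y"
  shows "act (inv g) (act g y) = y"
proof -
  have "act (inv g) (act g y) = act (inv g \<otimes> g) y" by (rule act_mult[symmetric]) (use assms in simp_all)
  also have "\<dots> = y" using act_one assms by simp
  finally show ?thesis .
qed

lemma act_act_inv:
  assumes "g \<in> carrier H" "y \<in> Y"
  shows "act g (act (inv g) y) = y"
proof -
  have "act g (act (inv g) y) = act (g \<otimes> inv g) y" by (rule act_mult[symmetric]) (use assms in simp_all)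
  also have "\<dots> = y" using act_one assms by simp
  finally show ?thesis .
qed

lemma subgroup_stabiliser: "subgroup stabiliser H"
proof (rule subgroupI)
  show "stabiliser \<subseteq> carrier H" "stabiliser \<noteq> {}"
    using base_point act_one unfolding stabiliser_def by auto
next
  fix g assume "g \<in> stabiliser"
  then show "inv g \<in> stabiliser"
    using act_inv_act[of g y0] base_point unfolding stabiliser_def by simp
next
  fix g h assume "g \<in> stabiliser" "h \<in> stabiliser"
  then show "g \<otimes> h \<in> stabiliser"
    using act_mult[of g h y0] base_point unfolding stabiliser_def by simp
qed

definition transporter :: "'y \<Rightarrow> 'g" where
  "transporter y = (SOME h. h \<in> carrier H \<and> act h y0 = y)"

lemma transporter:
  assumes "y \<in> Y"
  shows "transporter y \<in> carrier H" "act (transporter y) y0 = y"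
proof -
  have "\<exists>h. h \<in> carrier H \<and> act h y0 = y" using transitive[OF assms] by blast
  then have "transporter y \<in> carrier H \<and> act (transporter y) y0 = y"
    unfolding transporter_def by (rule someI_ex)
  then show "transporter y \<in> carrier H" "act (transporter y) y0 = y" by simp_all
qed

lemma transporter_translate:
  assumes g: "g \<in> carrier H" and y: "y \<in> Y"
  shows "inv (transporter y) \<otimes> g \<otimes> transporter (act (inv g) y) \<in> stabiliser"
proof -
  define a b where "a = transporter y" and "b = transporter (act (inv g) y)"
  have y': "act (inv g) y \<in> Y" using act_closed g y by simp
  have a: "a \<in> carrier H" "act a y0 = y" unfolding a_def using transporter[OF y] by simp_all
  have b: "b \<in> carrier H" "act b y0 = act (inv g) y" unfolding b_def using transporter[OF y'] by simp_all
  have "act (inv a \<otimes> g \<otimes> b) y0 = act (inv a \<otimes> g) (act b y0)"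
    using a b g base_point by (intro act_mult) simp_all
  also have "\<dots> = act (inv a) (act g (act (inv g) y))"
    using a b g y' by (simp add: act_mult)
  also have "\<dots> = y0" using act_act_inv[OF g y] act_inv_act[OF _ base_point, of a] a by simp
  finally show ?thesis unfolding stabiliser_def a_def[symmetric] b_def[symmetric] using a b g by simp
qed

text \<open>An invariant mean \<open>m\<close> on the stabiliser is moved around \<open>Y\<close> by the transporters and
  averaged against an invariant mean \<open>\<nu>\<close> on \<open>Y\<close>.\<close>

context
  fixes \<nu> :: "'y set \<Rightarrow> real" and m :: "'g set \<Rightarrow> real"
  assumes \<nu>: "finitely_additive_mean Y \<nu>"
    and \<nu>_invariant: "\<And>g B. g \<in> carrier H \<Longrightarrow> \<nu> {y\<in>Y. act g y \<in> B} = \<nu> (B \<inter> Y)"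
    and m: "finitely_additive_mean stabiliser m"
    and m_invariant: "\<And>g A. g \<in> stabiliser \<Longrightarrow> A \<subseteq> stabiliser \<Longrightarrow> m (g <#\<^bsub>H\<^esub> A) = m A"
begin

interpretation \<nu>: finitely_additive_mean Y \<nu> by (rule \<nu>)
interpretation m: finitely_additive_mean stabiliser m by (rule m)

definition local_mean :: "'g set \<Rightarrow> 'y \<Rightarrow> real" where
  "local_mean A y = m ((inv (transporter y) <#\<^bsub>H\<^esub> A) \<inter> stabiliser)"

lemma local_mean_bounded: "\<nu>.nonneg_bounded (local_mean A) 1"
  unfolding \<nu>.nonneg_bounded_def local_mean_def using m.nonneg m.mean_le_one by auto

lemma local_mean_additive:
  assumes "A \<subseteq> carrier H" "B \<subseteq> carrier H" "A \<inter> B = {}" "y \<in> Y"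
  shows "local_mean (A \<union> B) y = local_mean A y + local_mean B y"
proof -
  define g where "g = inv (transporter y)"
  have g: "g \<in> carrier H" using transporter assms(4) unfolding g_def by simp
  have "((g <#\<^bsub>H\<^esub> A) \<inter> stabiliser) \<inter> ((g <#\<^bsub>H\<^esub> B) \<inter> stabiliser) = {}"
    using l_coset_disjoint[OF g assms(1-3)] by blast
  moreover have "(g <#\<^bsub>H\<^esub> (A \<union> B)) \<inter> stabiliser
      = ((g <#\<^bsub>H\<^esub> A) \<inter> stabiliser) \<union> ((g <#\<^bsub>H\<^esub> B) \<inter> stabiliser)"
    by (auto simp: l_coset_def)
  ultimately show ?thesis
    unfolding local_mean_def g_def[symmetric] using m.additive by simp
qed

lemma local_mean_translate:
  assumes "g \<in> carrier H" "A \<subseteq> carrier H" "y \<in> Y"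
  shows "local_mean (g <#\<^bsub>H\<^esub> A) y = local_mean A (act (inv g) y)"
proof -
  define a b where "a = transporter y" and "b = transporter (act (inv g) y)"
  define n where "n = inv a \<otimes> g \<otimes> b"
  have ab: "a \<in> carrier H" "b \<in> carrier H"
    using transporter act_closed assms unfolding a_def b_def by simp_all
  have n: "n \<in> stabiliser" unfolding n_def a_def b_def by (rule transporter_translate[OF assms(1,3)])
  have "inv a <#\<^bsub>H\<^esub> (g <#\<^bsub>H\<^esub> A) = n <#\<^bsub>H\<^esub> (inv b <#\<^bsub>H\<^esub> A)"
    unfolding n_def using assms ab by (simp add: lcos_m_assoc m_assoc)
  also have "\<dots> \<inter> stabiliser = n <#\<^bsub>H\<^esub> ((inv b <#\<^bsub>H\<^esub> A) \<inter> stabiliser)"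
    using l_coset_Int_subgroup[OF subgroup_stabiliser n] l_coset_subset_G assms ab by simp
  finally show ?thesis
    unfolding local_mean_def a_def[symmetric] b_def[symmetric] using m_invariant[OF n] by simp
qed

lemma amenable_from_means: "amenable H"
proof (rule amenableI[where \<mu> = "\<lambda>A. \<nu>.mean_integral (local_mean A)"])
  show "finitely_additive_mean (carrier H) (\<lambda>A. \<nu>.mean_integral (local_mean A))"
  proof
    have "local_mean (carrier H) y = 1" if "y \<in> Y" for y
      using transporter[OF that] subgroup.subset[OF subgroup_stabiliser] m.total
      by (simp add: local_mean_def l_coset_carrier_eq Int_absorb1)
    then show "\<nu>.mean_integral (local_mean (carrier H)) = 1" by (simp add: \<nu>.integral_const)
  next
    fix A B assume AB: "A \<subseteq> carrier H" "B \<subseteq> carrier H" "A \<inter> B = {}"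
    have "\<nu>.mean_integral (local_mean (A \<union> B)) = \<nu>.mean_integral (\<lambda>y. local_mean A y + local_mean B y)"
      using local_mean_additive[OF AB] by (intro \<nu>.integral_cong) blast
    then show "\<nu>.mean_integral (local_mean (A \<union> B)) =
        \<nu>.mean_integral (local_mean A) + \<nu>.mean_integral (local_mean B)"
      using \<nu>.integral_add[OF local_mean_bounded local_mean_bounded] by simp
  qed (rule \<nu>.integral_nonneg[OF local_mean_bounded])
next
  fix g A assume gA: "g \<in> carrier H" "A \<subseteq> carrier H"
  have "\<nu>.mean_integral (local_mean (g <#\<^bsub>H\<^esub> A)) = \<nu>.mean_integral (\<lambda>y. local_mean A (act (inv g) y))"
    using local_mean_translate[OF gA] by (intro \<nu>.integral_cong) blast
  also have "\<dots> = \<nu>.mean_integral (local_mean A)"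
    using gA act_closed \<nu>_invariant
    by (intro \<nu>.integral_compose_measure_preserving[OF local_mean_bounded]) simp_all
  finally show "\<nu>.mean_integral (local_mean (g <#\<^bsub>H\<^esub> A)) = \<nu>.mean_integral (local_mean A)" .
qed

end

theorem amenable_if_stabiliser_amenable:
  assumes "finitely_additive_mean Y \<nu>"
    and "\<And>g B. g \<in> carrier H \<Longrightarrow> \<nu> {y\<in>Y. act g y \<in> B} = \<nu> (B \<inter> Y)"
    and "amenable (H\<lparr>carrier := stabiliser\<rparr>)"
  shows "amenable H"
proof -
  obtain m where "finitely_additive_mean stabiliser m"
    "\<And>g A. g \<in> stabiliser \<Longrightarrow> A \<subseteq> stabiliser \<Longrightarrow> m (g <#\<^bsub>H\<^esub> A) = m A"
    using amenableE[OF assms(3)] by auto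
  then show ?thesis using amenable_from_means[OF assms(1,2)] by blast
qed

lemma counting_mean_invariant:
  assumes "g \<in> carrier H"
  shows "card {y\<in>Y. act g y \<in> B} = card (B \<inter> Y)"
proof (rule bij_betw_same_card[of "act g"], rule bij_betw_byWitness[where f' = "act (inv g)"])
  show "\<forall>y\<in>{y \<in> Y. act g y \<in> B}. act (inv g) (act g y) = y"
    using act_inv_act assms by simp
  show "\<forall>y\<in>B \<inter> Y. act g (act (inv g) y) = y"
    using act_act_inv assms by simp
  show "act g ` {y \<in> Y. act g y \<in> B} \<subseteq> B \<inter> Y"
    using act_closed assms by auto
  show "act (inv g) ` (B \<inter> Y) \<subseteq> {y \<in> Y. act g y \<in> B}"
    using act_closed act_act_inv assms by auto
qed

corollary amenable_if_finite_stabiliser_amenable: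
  assumes "finite Y" and "amenable (H\<lparr>carrier := stabiliser\<rparr>)"
  shows "amenable H"
proof -
  define \<nu> where "\<nu> B = real (card (B \<inter> Y)) / real (card Y)" for B
  have mean: "finitely_additive_mean Y \<nu>"
    unfolding \<nu>_def by (rule finitely_additive_mean_counting) (use assms(1) base_point in auto)
  have invariant: "\<nu> {y\<in>Y. act g y \<in> B} = \<nu> (B \<inter> Y)" if "g \<in> carrier H" for g B
  proof -
    have "{y\<in>Y. act g y \<in> B} \<inter> Y = {y\<in>Y. act g y \<in> B}" "B \<inter> Y \<inter> Y = B \<inter> Y" by blast+
    then show ?thesis unfolding \<nu>_def using counting_mean_invariant[OF that, of B] by (simp only:)
  qed
  show ?thesis using amenable_if_stabiliser_amenable[OF mean invariant assms(2)] .
qed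

end

lemma amenable_if_finite_orbit:
  assumes "group H"
    and act_closed: "\<And>g y. g \<in> carrier H \<Longrightarrow> y \<in> Z \<Longrightarrow> act g y \<in> Z"
    and act_mult: "\<And>g h y. g \<in> carrier H \<Longrightarrow> h \<in> carrier H \<Longrightarrow> y \<in> Z \<Longrightarrow>
        act (g \<otimes>\<^bsub>H\<^esub> h) y = act g (act h y)"
    and act_one: "\<And>y. y \<in> Z \<Longrightarrow> act \<one>\<^bsub>H\<^esub> y = y"
    and "z \<in> Z" "finite ((\<lambda>h. act h z) ` carrier H)"
    and "amenable (H\<lparr>carrier := {h \<in> carrier H. act h z = z}\<rparr>)"
  shows "amenable H"
proof -
  interpret group H by (rule assms(1))
  interpret transitive_action H act "(\<lambda>h. act h z) ` carrier H" z
  proof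
    fix g y assume g: "g \<in> carrier H" and "y \<in> (\<lambda>h. act h z) ` carrier H"
    then obtain h where h: "h \<in> carrier H" "y = act h z" by blast
    then have "act g y = act (g \<otimes>\<^bsub>H\<^esub> h) z" using act_mult g \<open>z \<in> Z\<close> by simp
    then show "act g y \<in> (\<lambda>h. act h z) ` carrier H" using g h(1) by simp
  next
    show "z \<in> (\<lambda>h. act h z) ` carrier H"
      using act_one \<open>z \<in> Z\<close> by (auto intro!: image_eqI[of _ _ "\<one>\<^bsub>H\<^esub>"])
  qed (use act_mult act_one act_closed \<open>z \<in> Z\<close> in auto)
  show ?thesis
    using amenable_if_finite_stabiliser_amenable assms(6,7) unfolding stabiliser_def by blast
qed

lemma (in group) l_mult_preimage_subgroup:
  assumes "subgroup Y G" "a \<in> Y"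
  shows "{y \<in> Y. a \<otimes> y \<in> B} = inv a <#\<^bsub>G\<^esub> (B \<inter> Y)"
proof (intro equalityI subsetI)
  fix y assume y: "y \<in> {y \<in> Y. a \<otimes> y \<in> B}"
  have "a \<in> carrier G" "y \<in> carrier G" using assms y subgroup.subset by blast+
  then have "y = inv a \<otimes> (a \<otimes> y)" by (simp add: m_assoc[symmetric])
  then show "y \<in> inv a <#\<^bsub>G\<^esub> (B \<inter> Y)"
    using y subgroup.m_closed[OF assms] unfolding l_coset_def by blast
next
  fix y assume "y \<in> inv a <#\<^bsub>G\<^esub> (B \<inter> Y)"
  then obtain b where b: "b \<in> B" "b \<in> Y" "y = inv a \<otimes> b" unfolding l_coset_def by blast
  have "a \<in> carrier G" "b \<in> carrier G" using assms b(2) subgroup.subset by blast+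
  then have "a \<otimes> y = b" using b(3) by (simp add: m_assoc[symmetric])
  moreover have "y \<in> Y" using b(2,3) subgroup.m_closed[OF assms(1)] subgroup.m_inv_closed[OF assms] by simp
  ultimately show "y \<in> {y \<in> Y. a \<otimes> y \<in> B}" using b(1) by simp
qed

lemma transitive_action_on_image:
  assumes "group_hom G H \<phi>"
  shows "transitive_action G (\<lambda>s g. \<phi> s \<otimes>\<^bsub>H\<^esub> g) (\<phi> ` carrier G) \<one>\<^bsub>H\<^esub>"
proof -
  interpret group_hom G H \<phi> by (rule assms)
  show ?thesis
  proof
    fix s y assume "s \<in> carrier G" "y \<in> \<phi> ` carrier G"
    then obtain t where "t \<in> carrier G" "y = \<phi> t" by blast
    then show "\<phi> s \<otimes>\<^bsub>H\<^esub> y \<in> \<phi> ` carrier G"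
      using \<open>s \<in> carrier G\<close> by (auto intro!: image_eqI[of _ _ "s \<otimes>\<^bsub>G\<^esub> t"])
  next
    fix s t y assume "s \<in> carrier G" "t \<in> carrier G" "y \<in> \<phi> ` carrier G"
    then show "\<phi> (s \<otimes>\<^bsub>G\<^esub> t) \<otimes>\<^bsub>H\<^esub> y = \<phi> s \<otimes>\<^bsub>H\<^esub> (\<phi> t \<otimes>\<^bsub>H\<^esub> y)"
      by (auto simp: H.m_assoc)
  qed (auto intro!: image_eqI[of _ _ "\<one>\<^bsub>G\<^esub>"])
qed

text \<open>An extension of an amenable group by an amenable group is amenable: the group acts on
  the image of a homomorphism by left translation, with the kernel as stabiliser of the unit.\<close>

lemma amenable_extension:
  assumes "group_hom G H \<phi>"
    and "amenable (H\<lparr>carrier := \<phi> ` carrier G\<rparr>)" and "amenable (G\<lparr>carrier := kernel G H \<phi>\<rparr>)"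
  shows "amenable G"
proof -
  interpret group_hom G H \<phi> by (rule assms(1))
  interpret transitive_action G "\<lambda>s g. \<phi> s \<otimes>\<^bsub>H\<^esub> g" "\<phi> ` carrier G" "\<one>\<^bsub>H\<^esub>"
    by (rule transitive_action_on_image[OF assms(1)])
  obtain m where m: "finitely_additive_mean (\<phi> ` carrier G) m"
    and m_invariant: "\<And>a A. a \<in> \<phi> ` carrier G \<Longrightarrow> A \<subseteq> \<phi> ` carrier G \<Longrightarrow> m (a <#\<^bsub>H\<^esub> A) = m A"
    using amenableE[OF assms(2)] by auto
  have "m {y \<in> \<phi> ` carrier G. \<phi> s \<otimes>\<^bsub>H\<^esub> y \<in> B} = m (B \<inter> \<phi> ` carrier G)" if "s \<in> carrier G" for s B
    using that H.l_mult_preimage_subgroup[OF img_is_subgroup] m_invariant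
      subgroup.m_inv_closed[OF img_is_subgroup] by simp
  moreover have "stabiliser = kernel G H \<phi>"
    unfolding stabiliser_def kernel_def by auto
  ultimately show ?thesis using amenable_if_stabiliser_amenable[OF m] assms(3) by simp
qed

lemma (in group) right_transversal:
  assumes "subgroup K G"
  obtains T where "T \<subseteq> carrier G" "K <#> T = carrier G"
    "\<And>k1 k2 t1 t2. k1 \<in> K \<Longrightarrow> k2 \<in> K \<Longrightarrow> t1 \<in> T \<Longrightarrow> t2 \<in> T \<Longrightarrow> k1 \<otimes> t1 = k2 \<otimes> t2 \<Longrightarrow> k1 = k2"
proof
  define \<rho> where "\<rho> h = (SOME t. t \<in> K #> h)" for h
  have \<rho>: "\<rho> h \<in> K #> h" if "h \<in> carrier G" for h
    unfolding \<rho>_def using rcos_self[OF that assms] by (rule someI)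
  have K: "K \<subseteq> carrier G" using subgroup.subset[OF assms] .
  have \<rho>_carrier: "\<rho> h \<in> carrier G" if "h \<in> carrier G" for h
    using \<rho>[OF that] r_coset_subset_G[OF K that] by blast
  have coset_\<rho>: "K #> \<rho> h = K #> h" if "h \<in> carrier G" for h
    using repr_independence[OF \<rho>[OF that] that assms] by simp
  show "\<rho> ` carrier G \<subseteq> carrier G" using \<rho>_carrier by blast
  show "K <#> \<rho> ` carrier G = carrier G"
  proof
    show "K <#> \<rho> ` carrier G \<subseteq> carrier G" using K \<rho>_carrier by (intro setmult_subset_G) auto
    show "carrier G \<subseteq> K <#> \<rho> ` carrier G"
    proof
      fix h assume h: "h \<in> carrier G"
      then obtain k where k: "k \<in> K" "\<rho> h = k \<otimes> h" using \<rho> unfolding r_coset_def by blast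
      then have "h = inv k \<otimes> \<rho> h" using K h by (auto simp: m_assoc[symmetric])
      then show "h \<in> K <#> \<rho> ` carrier G"
        using k h subgroup.m_inv_closed[OF assms] unfolding set_mult_def by blast
    qed
  qed
  fix k1 k2 t1 t2 assume "k1 \<in> K" "k2 \<in> K" "t1 \<in> \<rho> ` carrier G" "t2 \<in> \<rho> ` carrier G"
    and eq: "k1 \<otimes> t1 = k2 \<otimes> t2"
  then obtain h1 h2 where h: "h1 \<in> carrier G" "h2 \<in> carrier G" "t1 = \<rho> h1" "t2 = \<rho> h2" by blast
  have t: "t1 \<in> carrier G" "t2 \<in> carrier G" using h \<rho>_carrier by simp_all
  have "t1 = (inv k1 \<otimes> k2) \<otimes> t2"
    using eq t K \<open>k1 \<in> K\<close> \<open>k2 \<in> K\<close> by (metis inv_solve_left' m_assoc m_closed inv_closed subsetD)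
  then have "t1 \<in> K #> t2"
    using \<open>k1 \<in> K\<close> \<open>k2 \<in> K\<close> subgroup.m_closed[OF assms] subgroup.m_inv_closed[OF assms]
    unfolding r_coset_def by blast
  then have "K #> h1 = K #> h2"
    using repr_independence[OF _ t(2) assms] coset_\<rho> h by metis
  then have "t1 = t2" unfolding h \<rho>_def by simp
  then show "k1 = k2" using eq t K \<open>k1 \<in> K\<close> \<open>k2 \<in> K\<close> by (meson right_cancel subsetD)
qed

lemma amenable_subgroup:
  assumes "group H" "subgroup K H" "amenable H"
  shows "amenable (H\<lparr>carrier := K\<rparr>)"
proof -
  interpret group H by (rule assms(1))
  obtain T where T: "T \<subseteq> carrier H" "K <#>\<^bsub>H\<^esub> T = carrier H"
    and unique: "\<And>k1 k2 t1 t2. k1 \<in> K \<Longrightarrow> k2 \<in> K \<Longrightarrow> t1 \<in> T \<Longrightarrow> t2 \<in> T \<Longrightarrow>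
      k1 \<otimes>\<^bsub>H\<^esub> t1 = k2 \<otimes>\<^bsub>H\<^esub> t2 \<Longrightarrow> k1 = k2"
    using right_transversal[OF assms(2)] by blast
  obtain \<mu> where \<mu>: "finitely_additive_mean (carrier H) \<mu>"
    and \<mu>_invariant: "\<And>g A. g \<in> carrier H \<Longrightarrow> A \<subseteq> carrier H \<Longrightarrow> \<mu> (g <#\<^bsub>H\<^esub> A) = \<mu> A"
    using amenableE[OF assms(3)] by blast
  interpret \<mu>: finitely_additive_mean "carrier H" \<mu> by (rule \<mu>)
  have K: "K \<subseteq> carrier H" using subgroup.subset[OF assms(2)] .
  have sub: "A <#>\<^bsub>H\<^esub> T \<subseteq> carrier H" if "A \<subseteq> K" for A
    using that K T(1) by (intro setmult_subset_G) auto
  show ?thesis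
  proof (rule amenableI[where \<mu> = "\<lambda>A. \<mu> (A <#>\<^bsub>H\<^esub> T)"], unfold_locales)
    show "\<mu> (carrier (H\<lparr>carrier := K\<rparr>) <#>\<^bsub>H\<^esub> T) = 1" using T(2) \<mu>.total by simp
  next
    fix A B assume AB: "A \<subseteq> carrier (H\<lparr>carrier := K\<rparr>)" "B \<subseteq> carrier (H\<lparr>carrier := K\<rparr>)" "A \<inter> B = {}"
    have "(A \<union> B) <#>\<^bsub>H\<^esub> T = (A <#>\<^bsub>H\<^esub> T) \<union> (B <#>\<^bsub>H\<^esub> T)" unfolding set_mult_def by blast
    moreover have "(A <#>\<^bsub>H\<^esub> T) \<inter> (B <#>\<^bsub>H\<^esub> T) = {}"
    proof -
      have "a = b" if "a \<in> A" "b \<in> B" "t1 \<in> T" "t2 \<in> T" "a \<otimes>\<^bsub>H\<^esub> t1 = b \<otimes>\<^bsub>H\<^esub> t2" for a b t1 t2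
      proof -
        have "a \<in> K" "b \<in> K" using that(1,2) AB(1,2) by auto
        then show ?thesis using unique that(3-5) by blast
      qed
      then show ?thesis using AB(3) unfolding set_mult_def by blast
    qed
    ultimately show "\<mu> ((A \<union> B) <#>\<^bsub>H\<^esub> T) = \<mu> (A <#>\<^bsub>H\<^esub> T) + \<mu> (B <#>\<^bsub>H\<^esub> T)"
      using \<mu>.additive sub AB by simp
  next
    fix A assume "A \<subseteq> carrier (H\<lparr>carrier := K\<rparr>)"
    then show "0 \<le> \<mu> (A <#>\<^bsub>H\<^esub> T)" using \<mu>.nonneg sub by simp
  next
    fix k A assume "k \<in> carrier (H\<lparr>carrier := K\<rparr>)" "A \<subseteq> carrier (H\<lparr>carrier := K\<rparr>)"
    then have "(k <#\<^bsub>H\<^esub> A) <#>\<^bsub>H\<^esub> T = k <#\<^bsub>H\<^esub> (A <#>\<^bsub>H\<^esub> T)"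
      using K T(1) by (intro setmult_lcos_assoc) auto
    then show "\<mu> ((k <#\<^bsub>H\<lparr>carrier := K\<rparr>\<^esub> A) <#>\<^bsub>H\<^esub> T) = \<mu> (A <#>\<^bsub>H\<^esub> T)"
      using \<mu>_invariant \<open>k \<in> carrier (H\<lparr>carrier := K\<rparr>)\<close> \<open>A \<subseteq> _\<close> K sub by auto
  qed
qed

lemma amenable_inj_hom:
  assumes "group G" "group H" "\<phi> \<in> hom G H" "inj_on \<phi> (carrier G)" "amenable H"
  shows "amenable G"
proof -
  interpret group_hom G H \<phi> using assms(1-3) by (simp add: group_hom_def group_hom_axioms_def)
  obtain \<mu> where \<mu>: "finitely_additive_mean (\<phi> ` carrier G) \<mu>"
    and \<mu>_invariant: "\<And>a A. a \<in> \<phi> ` carrier G \<Longrightarrow> A \<subseteq> \<phi> ` carrier G \<Longrightarrow> \<mu> (a <#\<^bsub>H\<^esub> A) = \<mu> A"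
    using amenableE[OF amenable_subgroup[OF assms(2) img_is_subgroup assms(5)]] by auto
  interpret \<mu>: finitely_additive_mean "\<phi> ` carrier G" \<mu> by (rule \<mu>)
  have image_l_coset: "\<phi> ` (g <#\<^bsub>G\<^esub> A) = \<phi> g <#\<^bsub>H\<^esub> \<phi> ` A" if "g \<in> carrier G" "A \<subseteq> carrier G" for g A
    using coset_hom(1)[OF assms(3) that(2,1)] .
  show ?thesis
  proof (rule amenableI[where \<mu> = "\<lambda>A. \<mu> (\<phi> ` A)"], unfold_locales)
    fix A B assume "A \<subseteq> carrier G" "B \<subseteq> carrier G" "A \<inter> B = {}"
    moreover have "\<phi> ` A \<inter> \<phi> ` B = {}"
      using calculation inj_on_image_Int[OF assms(4), of A B, symmetric] by simp
    ultimately show "\<mu> (\<phi> ` (A \<union> B)) = \<mu> (\<phi> ` A) + \<mu> (\<phi> ` B)"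
      using \<mu>.additive by (simp add: image_Un image_mono)
  qed (use \<mu>.total \<mu>.nonneg \<mu>_invariant image_l_coset in \<open>auto simp: image_mono\<close>)
qed

lemma unit_cube_sequence_cluster_point:
  fixes s :: "nat \<Rightarrow> 'x \<Rightarrow> real"
  assumes "\<And>n x. 0 \<le> s n x \<and> s n x \<le> 1"
  obtains \<mu> where "\<And>Z. closed Z \<Longrightarrow> (\<forall>\<^sub>F n in sequentially. s n \<in> Z) \<Longrightarrow> \<mu> \<in> Z"
proof -
  define K :: "('x \<Rightarrow> real) set" where "K = PiE UNIV (\<lambda>_. {0..1})"
  have "compactin (product_topology (\<lambda>_. euclidean) UNIV) K"
    unfolding K_def compactin_PiE by simp
  then have "compact K" by (simp add: euclidean_product_topology)
  moreover have "filtermap s sequentially \<noteq> bot" by (simp add: filtermap_bot_iff)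
  moreover have "eventually (\<lambda>x. x \<in> K) (filtermap s sequentially)"
    unfolding eventually_filtermap K_def using assms by (simp add: PiE_UNIV_domain)
  ultimately obtain \<mu> where \<mu>: "inf (nhds \<mu>) (filtermap s sequentially) \<noteq> bot"
    unfolding compact_filter by blast
  have "\<mu> \<in> Z" if Z: "closed Z" "\<forall>\<^sub>F n in sequentially. s n \<in> Z" for Z
  proof (rule ccontr)
    assume "\<mu> \<notin> Z"
    then have "eventually (\<lambda>x. x \<in> - Z) (nhds \<mu>)" using Z(1) by (intro eventually_nhds_in_open) auto
    moreover have "eventually (\<lambda>x. x \<in> Z) (filtermap s sequentially)"
      unfolding eventually_filtermap using Z(2) .
    ultimately have "eventually (\<lambda>x. False) (inf (nhds \<mu>) (filtermap s sequentially))"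
      unfolding eventually_inf by blast
    then show False using \<mu> by (simp add: eventually_False)
  qed
  then show ?thesis using that by blast
qed

text \<open>A sequence of means that is asymptotically invariant has a pointwise cluster point, and
  every closed condition eventually satisfied by the sequence passes to the cluster point.\<close>

lemma amenable_if_asymptotically_invariant_means:
  fixes s :: "nat \<Rightarrow> 'a set \<Rightarrow> real" and H :: "('a, 'b) monoid_scheme"
  assumes bounds: "\<And>n A. 0 \<le> s n A \<and> s n A \<le> 1"
    and total: "\<And>n. s n (carrier H) = 1"
    and additive: "\<And>n A B. A \<subseteq> carrier H \<Longrightarrow> B \<subseteq> carrier H \<Longrightarrow> A \<inter> B = {} \<Longrightarrow>
        s n (A \<union> B) = s n A + s n B"
    and invariant: "\<And>g A. g \<in> carrier H \<Longrightarrow> A \<subseteq> carrier H \<Longrightarrow>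
        \<forall>\<^sub>F n in sequentially. s n (g <#\<^bsub>H\<^esub> A) = s n A"
  shows "amenable H"
proof -
  obtain \<mu> where \<mu>: "\<And>Z. closed Z \<Longrightarrow> (\<forall>\<^sub>F n in sequentially. s n \<in> Z) \<Longrightarrow> \<mu> \<in> Z"
    using unit_cube_sequence_cluster_point[of s, OF bounds] by blast
  show ?thesis
  proof (rule amenableI[where \<mu> = \<mu>], unfold_locales)
    show "\<mu> (carrier H) = 1" using \<mu>[of "{f. f (carrier H) = 1}"] total by (simp add: closed_Collect_eq)
  next
    fix A show "0 \<le> \<mu> A" using \<mu>[of "{f. 0 \<le> f A}"] bounds by (simp add: closed_Collect_le)
  next
    fix A B assume "A \<subseteq> carrier H" "B \<subseteq> carrier H" "A \<inter> B = {}"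
    then show "\<mu> (A \<union> B) = \<mu> A + \<mu> B"
      using \<mu>[of "{f. f (A \<union> B) = f A + f B}"] additive by (simp add: closed_Collect_eq continuous_on_add)
  next
    fix g A assume "g \<in> carrier H" "A \<subseteq> carrier H"
    then have "\<forall>\<^sub>F n in sequentially. s n \<in> {f. f (g <#\<^bsub>H\<^esub> A) = f A}" using invariant by simp
    then show "\<mu> (g <#\<^bsub>H\<^esub> A) = \<mu> A"
      using \<mu>[of "{f. f (g <#\<^bsub>H\<^esub> A) = f A}"] by (simp add: closed_Collect_eq)
  qed
qed

text \<open>A group exhausted by amenable subgroups is amenable: their invariant means, extended by
  zero, are asymptotically invariant.\<close>

lemma amenable_exhaustion:
  fixes K :: "nat \<Rightarrow> 'a set" and H :: "('a, 'b) monoid_scheme"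
  assumes "group H" and sub: "\<And>n. subgroup (K n) H" and amenable: "\<And>n. amenable (H\<lparr>carrier := K n\<rparr>)"
    and exhaust: "\<And>g. g \<in> carrier H \<Longrightarrow> \<exists>N. \<forall>n\<ge>N. g \<in> K n"
  shows "amenable H"
proof -
  interpret group H by (rule assms(1))
  have "\<forall>n. \<exists>m. finitely_additive_mean (K n) m \<and>
      (\<forall>g\<in>K n. \<forall>A. A \<subseteq> K n \<longrightarrow> m (g <#\<^bsub>H\<^esub> A) = m A)"
    using amenable unfolding amenable_iff_invariant_mean by simp
  from choice[OF this] obtain M where M: "\<And>n. finitely_additive_mean (K n) (M n)"
    and M_invariant: "\<And>n g A. g \<in> K n \<Longrightarrow> A \<subseteq> K n \<Longrightarrow> M n (g <#\<^bsub>H\<^esub> A) = M n A"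
    by blast
  show ?thesis
  proof (rule amenable_if_asymptotically_invariant_means[where s = "\<lambda>n A. M n (A \<inter> K n)"])
    show "0 \<le> M n (A \<inter> K n) \<and> M n (A \<inter> K n) \<le> 1" for n A
      using finitely_additive_mean.nonneg[OF M] finitely_additive_mean.mean_le_one[OF M] by auto
    show "M n (carrier H \<inter> K n) = 1" for n
      using finitely_additive_mean.total[OF M] subgroup.subset[OF sub] by (simp add: Int_absorb1)
  next
    fix n and A B :: "'a set" assume "A \<inter> B = {}"
    then have "(A \<union> B) \<inter> K n = (A \<inter> K n) \<union> (B \<inter> K n)" "(A \<inter> K n) \<inter> (B \<inter> K n) = {}" by blast+
    then show "M n ((A \<union> B) \<inter> K n) = M n (A \<inter> K n) + M n (B \<inter> K n)"
      using finitely_additive_mean.additive[OF M[of n]] by simp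
  next
    fix g A assume gA: "g \<in> carrier H" "A \<subseteq> carrier H"
    obtain N where N: "\<And>n. n \<ge> N \<Longrightarrow> g \<in> K n" using exhaust[OF gA(1)] by blast
    have "M n ((g <#\<^bsub>H\<^esub> A) \<inter> K n) = M n (A \<inter> K n)" if "n \<ge> N" for n
      unfolding l_coset_Int_subgroup[OF sub N[OF that] gA(2)] using M_invariant[OF N[OF that]] by simp
    then show "\<forall>\<^sub>F n in sequentially. M n ((g <#\<^bsub>H\<^esub> A) \<inter> K n) = M n (A \<inter> K n)"
      unfolding eventually_sequentially by blast
  qed
qed

section \<open>Free odometers\<close>

locale free_odometer = group G for G (structure) +
  fixes Gs :: "nat \<Rightarrow> 'a set"
  assumes normal_Gs: "\<And>n. Gs n \<lhd> G"
    and finite_cosets: "\<And>n. finite (rcosets (Gs n))"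
    and Gs_decreasing: "\<And>n. Gs (Suc n) \<subseteq> Gs n"
    and free: "\<And>g x. g \<in> carrier G \<Longrightarrow> x \<in> odometer_space G Gs \<Longrightarrow>
        odometer_action G g x = x \<Longrightarrow> g = \<one>"
begin

abbreviation "X \<equiv> odometer_space G Gs"
abbreviation "act \<equiv> odometer_action G"
abbreviation "cosets n \<equiv> rcosets (Gs n)"

lemma subgroup_Gs: "subgroup (Gs n) G"
  using normal_Gs normal_imp_subgroup by blast

lemma Gs_subset: "Gs n \<subseteq> carrier G"
  using subgroup.subset[OF subgroup_Gs] .

lemma cosetsE:
  assumes "C \<in> cosets n"
  obtains a where "a \<in> carrier G" "C = Gs n #> a"
  using assms unfolding RCOSETS_def by blast

lemma coset_subset: "C \<in> cosets n \<Longrightarrow> C \<subseteq> carrier G"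
  by (metis cosetsE r_coset_subset_G Gs_subset)

lemma coset_nonempty: "C \<in> cosets n \<Longrightarrow> C \<noteq> {}"
  by (metis cosetsE rcos_self subgroup_Gs empty_iff)

lemma cosets_eqI: "C \<in> cosets n \<Longrightarrow> D \<in> cosets n \<Longrightarrow> C \<inter> D \<noteq> {} \<Longrightarrow> C = D"
  using rcos_disjoint[OF subgroup_Gs] unfolding pairwise_def disjnt_def by blast

lemma l_coset_r_coset:
  assumes "g \<in> carrier G" "a \<in> carrier G"
  shows "g <#\<^bsub>G\<^esub> (Gs n #> a) = Gs n #> (g \<otimes> a)"
proof -
  have "g <#\<^bsub>G\<^esub> (Gs n #> a) = (g <#\<^bsub>G\<^esub> Gs n) #> a" using coset_assoc assms Gs_subset by simp
  also have "\<dots> = (Gs n #> g) #> a" using normal.coset_eq[OF normal_Gs] assms(1) by simp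
  finally show ?thesis using coset_mult_assoc assms Gs_subset by simp
qed

lemma l_coset_in_cosets: "g \<in> carrier G \<Longrightarrow> C \<in> cosets n \<Longrightarrow> g <#\<^bsub>G\<^esub> C \<in> cosets n"
  by (metis cosetsE l_coset_r_coset m_closed rcosetsI Gs_subset)

lemma l_coset_mono: "A \<subseteq> B \<Longrightarrow> g <#\<^bsub>G\<^esub> A \<subseteq> g <#\<^bsub>G\<^esub> B"
  unfolding l_coset_def by blast

lemma odometer_space_iff: "x \<in> X \<longleftrightarrow> (\<forall>n. x n \<in> cosets n) \<and> (\<forall>n. x (Suc n) \<subseteq> x n)"
  unfolding odometer_space_def by simp

lemma odometer_space_antimono:
  assumes "x \<in> X" "m \<le> n"
  shows "x n \<subseteq> x m"
  using assms(2)
proof (induction n rule: dec_induct)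
  case (step k)
  then show ?case using assms(1) unfolding odometer_space_iff by blast
qed simp

lemma odometer_space_agree:
  assumes "x \<in> X" "y \<in> X" "y n = x n" "m \<le> n"
  shows "y m = x m"
proof (rule cosets_eqI)
  show "y m \<in> cosets m" "x m \<in> cosets m" using assms odometer_space_iff by auto
  have "x n \<noteq> {}" using assms odometer_space_iff coset_nonempty by blast
  moreover have "x n \<subseteq> y m" "x n \<subseteq> x m" using odometer_space_antimono assms by metis+
  ultimately show "y m \<inter> x m \<noteq> {}" by blast
qed

lemma point_subset: "x \<in> X \<Longrightarrow> x n \<subseteq> carrier G"
  using coset_subset odometer_space_iff by blast

lemma act_apply: "act g x n = g <#\<^bsub>G\<^esub> x n"
  by (simp add: odometer_action_def)

lemma act_closed: "g \<in> carrier G \<Longrightarrow> x \<in> X \<Longrightarrow> act g x \<in> X"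
  unfolding odometer_space_iff odometer_action_def using l_coset_in_cosets l_coset_mono by blast

lemma act_mult: "g \<in> carrier G \<Longrightarrow> h \<in> carrier G \<Longrightarrow> x \<in> X \<Longrightarrow> act (g \<otimes> h) x = act g (act h x)"
  unfolding odometer_action_def by (rule ext) (simp add: lcos_m_assoc point_subset)

lemma act_one: "x \<in> X \<Longrightarrow> act \<one> x = x"
  unfolding odometer_action_def by (rule ext) (simp add: lcos_mult_one point_subset)

lemma act_inv_act: "g \<in> carrier G \<Longrightarrow> x \<in> X \<Longrightarrow> act (inv g) (act g x) = x"
  using act_mult[of "inv g" g x, symmetric] act_one by simp

lemma act_act_inv: "g \<in> carrier G \<Longrightarrow> x \<in> X \<Longrightarrow> act g (act (inv g) x) = x"
  using act_mult[of g "inv g" x, symmetric] act_one by simp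

lemma act_inj:
  assumes "g \<in> carrier G" "h \<in> carrier G" "x \<in> X" "act g x = act h x"
  shows "g = h"
proof -
  have "act (inv h \<otimes> g) x = x" using assms act_mult act_inv_act by (metis inv_closed)
  then have "inv h \<otimes> g = \<one>" using free assms by simp
  then show ?thesis using assms by (metis inv_closed inv_inv inv_solve_left r_one one_closed)
qed

lemma Gs_in_cosets: "Gs n \<in> cosets n"
  using rcosetsI[OF Gs_subset one_closed] coset_mult_one[OF Gs_subset] by simp

lemma Gs_in_space: "Gs \<in> X"
  unfolding odometer_space_iff using Gs_in_cosets Gs_decreasing by auto

definition point_over :: "nat \<Rightarrow> 'a set \<Rightarrow> nat \<Rightarrow> 'a set" where
  "point_over n C = (\<lambda>m. Gs m #> (SOME a. a \<in> carrier G \<and> C = Gs n #> a))"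

lemma point_over:
  assumes "C \<in> cosets n"
  shows "point_over n C \<in> X" "point_over n C n = C"
proof -
  define a where "a = (SOME a. a \<in> carrier G \<and> C = Gs n #> a)"
  have "\<exists>a. a \<in> carrier G \<and> C = Gs n #> a" using assms by (blast elim: cosetsE)
  then have a: "a \<in> carrier G" "C = Gs n #> a" unfolding a_def by (metis (mono_tags, lifting) someI_ex)+
  show "point_over n C n = C" unfolding point_over_def a_def[symmetric] using a by simp
  show "point_over n C \<in> X" unfolding point_over_def a_def[symmetric] odometer_space_iff
    using a rcosetsI[OF Gs_subset] Gs_decreasing unfolding r_coset_def by blast
qed

abbreviation "T \<equiv> odometer_topology G Gs"

lemma odometer_topology_eq:
  "T = subtopology (product_topology (\<lambda>n. discrete_topology (cosets n)) UNIV) X"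
  by (simp add: odometer_topology_def)

lemma space_subset_topspace: "X \<subseteq> topspace (product_topology (\<lambda>n. discrete_topology (cosets n)) UNIV)"
  using odometer_space_iff by (auto simp: PiE_UNIV_domain)

lemma topspace_odometer: "topspace T = X"
  using space_subset_topspace by (auto simp: odometer_topology_eq)

definition cylinder :: "nat \<Rightarrow> (nat \<Rightarrow> 'a set) \<Rightarrow> (nat \<Rightarrow> 'a set) set" where
  "cylinder n x = {y \<in> X. y n = x n}"

lemma continuous_map_coordinate: "continuous_map T (discrete_topology (cosets k)) (\<lambda>x. x k)"
  unfolding odometer_topology_eq
  by (intro continuous_map_from_subtopology continuous_map_product_projection) simp

lemma openin_cylinder:
  assumes "x \<in> X"
  shows "openin T (cylinder n x)"
proof -
  have "cylinder n x = {y \<in> topspace T. y n \<in> {x n}}"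
    unfolding topspace_odometer cylinder_def by auto
  moreover have "openin T {y \<in> topspace T. y n \<in> {x n}}"
    using openin_continuous_map_preimage[OF continuous_map_coordinate[of n], of "{x n}"] assms
    by (auto simp: odometer_space_iff)
  ultimately show ?thesis by simp
qed

lemma cylinder_self: "x \<in> X \<Longrightarrow> x \<in> cylinder n x"
  unfolding cylinder_def by simp

lemma cylinder_antimono: "x \<in> X \<Longrightarrow> m \<le> n \<Longrightarrow> cylinder n x \<subseteq> cylinder m x"
  unfolding cylinder_def using odometer_space_agree by blast

lemma cylinder_eq: "y \<in> cylinder n x \<Longrightarrow> cylinder n y = cylinder n x"
  unfolding cylinder_def by auto

lemma act_cylinder: "g \<in> carrier G \<Longrightarrow> y \<in> cylinder n x \<Longrightarrow> act g y \<in> cylinder n (act g x)"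
  unfolding cylinder_def using act_closed by (simp add: act_apply)

lemma continuous_map_act:
  assumes "g \<in> carrier G"
  shows "continuous_map T T (act g)"
proof -
  have "continuous_map T (discrete_topology (cosets k)) (\<lambda>x. act g x k)" for k
  proof -
    have "continuous_map (discrete_topology (cosets k)) (discrete_topology (cosets k)) (\<lambda>C. g <#\<^bsub>G\<^esub> C)"
      using l_coset_in_cosets[OF assms] by auto
    from continuous_map_compose[OF continuous_map_coordinate[of k] this] show ?thesis
      by (simp add: o_def act_apply)
  qed
  then have "continuous_map T (product_topology (\<lambda>n. discrete_topology (cosets n)) UNIV) (act g)"
    unfolding continuous_map_componentwise_UNIV by blast
  moreover have "act g \<in> topspace T \<rightarrow> X" using act_closed assms topspace_odometer by auto
  ultimately show ?thesis
    unfolding odometer_topology_eq by (simp add: continuous_map_in_subtopology continuous_map_from_subtopology)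
qed

text \<open>\<open>X\<close> is compact as a closed subset of the product of the finite discrete spaces \<open>G/G\<^sub>n\<close>.\<close>

lemma compact_space_odometer: "compact_space T"
proof -
  define P where "P = product_topology (\<lambda>n. discrete_topology (cosets n)) UNIV"
  define S where "S n = {x \<in> topspace P. (x (Suc n), x n) \<in> {(a, b). a \<subseteq> b} \<inter> (cosets (Suc n) \<times> cosets n)}"
    for n
  have closed: "closedin P (S n)" for n
  proof -
    have "continuous_map P (prod_topology (discrete_topology (cosets (Suc n))) (discrete_topology (cosets n)))
        (\<lambda>x. (x (Suc n), x n))"
      unfolding P_def by (intro continuous_map_pairedI continuous_map_product_projection) auto
    then have "continuous_map P (discrete_topology (cosets (Suc n) \<times> cosets n)) (\<lambda>x. (x (Suc n), x n))"
      by (simp add: prod_topology_discrete_topology)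
    then show ?thesis unfolding S_def by (rule closedin_continuous_map_preimage) auto
  qed
  have S: "(\<Inter>n. S n) = X"
  proof (intro equalityI subsetI)
    fix x assume "x \<in> (\<Inter>n. S n)"
    then have "x \<in> topspace P" "\<forall>n. x (Suc n) \<subseteq> x n" unfolding S_def by auto
    then show "x \<in> X" unfolding P_def odometer_space_iff by (simp add: PiE_UNIV_domain Pi_iff)
  next
    fix x assume "x \<in> X"
    then show "x \<in> (\<Inter>n. S n)" using space_subset_topspace unfolding S_def P_def odometer_space_iff by auto
  qed
  have "closedin P (\<Inter>n. S n)" using closed by (intro closedin_INT) auto
  moreover have "compact_space P"
    using finite_cosets by (simp add: P_def compact_space_product_topology compact_space_discrete_topology)
  ultimately have "compactin P X" using closedin_compact_space S by metis
  then show ?thesis unfolding odometer_topology_eq P_def[symmetric] by (rule compact_space_subtopology)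
qed

lemma openin_contains_cylinder:
  assumes "openin T U" "x \<in> U"
  obtains N where "cylinder N x \<subseteq> U"
proof -
  obtain W where W: "openin (product_topology (\<lambda>n. discrete_topology (cosets n)) UNIV) W" "U = W \<inter> X"
    using assms(1) unfolding odometer_topology_eq openin_subtopology by blast
  have x: "x \<in> X" "x \<in> W" using W assms(2) by auto
  have "\<exists>V. finite {i \<in> UNIV. V i \<noteq> topspace (discrete_topology (cosets i))} \<and>
      (\<forall>i \<in> UNIV. openin (discrete_topology (cosets i)) (V i)) \<and> x \<in> Pi\<^sub>E UNIV V \<and> Pi\<^sub>E UNIV V \<subseteq> W"
    using bspec[OF W(1)[unfolded openin_product_topology_alt] x(2)] .
  then obtain V where "finite {i \<in> UNIV. V i \<noteq> topspace (discrete_topology (cosets i))}"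
      "x \<in> Pi\<^sub>E UNIV V" "Pi\<^sub>E UNIV V \<subseteq> W"
    by blast
  then have V: "finite {i. V i \<noteq> cosets i}" "x \<in> Pi\<^sub>E UNIV V" "Pi\<^sub>E UNIV V \<subseteq> W"
    by simp_all
  define N where "N = Max (insert 0 {i. V i \<noteq> cosets i})"
  have N: "i \<le> N" if "V i \<noteq> cosets i" for i unfolding N_def using V(1) that by auto
  have "y i \<in> V i" if "y \<in> cylinder N x" for y i
  proof (cases "V i = cosets i")
    case True
    then show ?thesis using that unfolding cylinder_def odometer_space_iff by simp
  next
    case False
    then have "y i = x i" using that odometer_space_agree[of x y N i] N x unfolding cylinder_def by blast
    then show ?thesis using V(2) by (simp add: PiE_UNIV_domain Pi_iff)
  qed
  then have "cylinder N x \<subseteq> Pi\<^sub>E UNIV V" by (simp add: PiE_UNIV_domain subset_iff)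
  moreover have "cylinder N x \<subseteq> X" unfolding cylinder_def by blast
  ultimately show ?thesis using that V(3) W(2) by blast
qed

text \<open>By compactness, a locally given choice of group elements can be read off at one fixed level.\<close>

lemma uniform_cylinder_level:
  assumes "\<forall>x\<in>X. \<exists>U g. openin T U \<and> x \<in> U \<and> g \<in> carrier G \<and> (\<forall>y\<in>U. s y = act g y)"
  obtains N where "\<forall>x\<in>X. \<exists>g\<in>carrier G. \<forall>y\<in>cylinder N x. s y = act g y"
proof -
  have "\<forall>x\<in>X. \<exists>p. snd p \<in> carrier G \<and> (\<forall>y\<in>cylinder (fst p) x. s y = act (snd p) y)"
  proof
    fix x assume x: "x \<in> X"
    obtain U g where U: "openin T U" "x \<in> U" "g \<in> carrier G" "\<forall>y\<in>U. s y = act g y"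
      using assms x by blast
    obtain N where "cylinder N x \<subseteq> U" using openin_contains_cylinder[OF U(1,2)] by blast
    then show "\<exists>p. snd p \<in> carrier G \<and> (\<forall>y\<in>cylinder (fst p) x. s y = act (snd p) y)"
      using U(3,4) by (intro exI[of _ "(N, g)"]) auto
  qed
  then obtain p where p: "\<forall>x\<in>X. snd (p x) \<in> carrier G \<and> (\<forall>y\<in>cylinder (fst (p x)) x. s y = act (snd (p x)) y)"
    by (rule bchoice[THEN exE]) blast
  have "\<forall>U\<in>(\<lambda>x. cylinder (fst (p x)) x) ` X. openin T U" using openin_cylinder by auto
  moreover have "topspace T \<subseteq> \<Union>((\<lambda>x. cylinder (fst (p x)) x) ` X)"
    using topspace_odometer cylinder_self by auto
  ultimately obtain F where F: "finite F" "F \<subseteq> (\<lambda>x. cylinder (fst (p x)) x) ` X" "topspace T \<subseteq> \<Union>F"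
    using compact_space_odometer[unfolded compact_space_alt, rule_format, of "(\<lambda>x. cylinder (fst (p x)) x) ` X"]
    by blast
  obtain C where C: "C \<subseteq> X" "finite C" "F = (\<lambda>x. cylinder (fst (p x)) x) ` C"
    using finite_subset_image[OF F(1,2)] by blast
  define M where "M = Max (insert 0 ((\<lambda>c. fst (p c)) ` C))"
  have M: "fst (p c) \<le> M" if "c \<in> C" for c unfolding M_def using C(2) that by auto
  show ?thesis
  proof (rule that, intro ballI)
    fix x assume x: "x \<in> X"
    then obtain c where c: "c \<in> C" "x \<in> cylinder (fst (p c)) c" using F(3) C(3) topspace_odometer by auto
    have "cylinder M x \<subseteq> cylinder (fst (p c)) x" using cylinder_antimono[OF x M[OF c(1)]] .
    also have "\<dots> = cylinder (fst (p c)) c" using cylinder_eq[OF c(2)] .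
    finally show "\<exists>g\<in>carrier G. \<forall>y\<in>cylinder M x. s y = act g y" using p c C(1) by blast
  qed
qed


section \<open>The topological full group\<close>

abbreviation "FG \<equiv> topological_full_group G Gs"

definition locally_acting :: "((nat \<Rightarrow> 'a set) \<Rightarrow> nat \<Rightarrow> 'a set) \<Rightarrow> bool" where
  "locally_acting s \<longleftrightarrow> (\<forall>x\<in>X. \<exists>U g. openin T U \<and> closedin T U \<and> x \<in> U \<and> g \<in> carrier G \<and>
     (\<forall>y\<in>U. s y = act g y))"

lemma carrier_FG_iff:
  "s \<in> carrier FG \<longleftrightarrow> homeomorphic_map T T s \<and> (\<forall>x. x \<notin> X \<longrightarrow> s x = x) \<and> locally_acting s"
  unfolding topological_full_group_def locally_acting_def by simp

lemma mult_FG [simp]: "s \<otimes>\<^bsub>FG\<^esub> t = s \<circ> t"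
  unfolding topological_full_group_def by simp

lemma one_FG [simp]: "\<one>\<^bsub>FG\<^esub> = id"
  unfolding topological_full_group_def by simp

lemma FG_maps_space: "s \<in> carrier FG \<Longrightarrow> x \<in> X \<Longrightarrow> s x \<in> X"
  unfolding carrier_FG_iff
  using continuous_map_image_subset_topspace[OF homeomorphic_imp_continuous_map] topspace_odometer
  by blast

lemma FG_outside: "s \<in> carrier FG \<Longrightarrow> x \<notin> X \<Longrightarrow> s x = x"
  unfolding carrier_FG_iff by blast

lemma FG_locallyE:
  assumes "s \<in> carrier FG" "x \<in> X"
  obtains U g where "openin T U" "closedin T U" "x \<in> U" "g \<in> carrier G" "\<forall>y\<in>U. s y = act g y"
  using assms unfolding carrier_FG_iff locally_acting_def by blast

lemma FG_uniform_level:
  assumes "s \<in> carrier FG"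
  obtains N where "\<forall>x\<in>X. \<exists>g\<in>carrier G. \<forall>y\<in>cylinder N x. s y = act g y"
proof (rule uniform_cylinder_level)
  show "\<forall>x\<in>X. \<exists>U g. openin T U \<and> x \<in> U \<and> g \<in> carrier G \<and> (\<forall>y\<in>U. s y = act g y)"
    using FG_locallyE[OF assms] by metis
qed

lemma id_in_FG: "id \<in> carrier FG"
proof -
  have "locally_acting id" unfolding locally_acting_def
  proof
    fix x assume "x \<in> X"
    then show "\<exists>U g. openin T U \<and> closedin T U \<and> x \<in> U \<and> g \<in> carrier G \<and> (\<forall>y\<in>U. id y = act g y)"
      using act_one openin_topspace[of T] closedin_topspace[of T] unfolding topspace_odometer
      by (intro exI[of _ X] exI[of _ \<one>]) simp
  qed
  then show ?thesis unfolding carrier_FG_iff by simp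
qed

lemma comp_in_FG:
  assumes s: "s \<in> carrier FG" and t: "t \<in> carrier FG"
  shows "s \<circ> t \<in> carrier FG"
proof -
  have hs: "homeomorphic_map T T s" and ht: "homeomorphic_map T T t" using s t unfolding carrier_FG_iff by auto
  have "locally_acting (s \<circ> t)" unfolding locally_acting_def
  proof
    fix x assume x: "x \<in> X"
    obtain U g where U: "openin T U" "closedin T U" "x \<in> U" "g \<in> carrier G" "\<forall>y\<in>U. t y = act g y"
      using FG_locallyE[OF t x] by metis
    obtain V h where V: "openin T V" "closedin T V" "t x \<in> V" "h \<in> carrier G" "\<forall>y\<in>V. s y = act h y"
      using FG_locallyE[OF s FG_maps_space[OF t x]] by metis
    define W where "W = U \<inter> {y \<in> topspace T. t y \<in> V}"
    have ct: "continuous_map T T t" using homeomorphic_imp_continuous_map[OF ht] .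
    have "openin T W" unfolding W_def using U(1) openin_continuous_map_preimage[OF ct V(1)] by blast
    moreover have "closedin T W" unfolding W_def using U(2) closedin_continuous_map_preimage[OF ct V(2)] by blast
    moreover have "x \<in> W" unfolding W_def using U(3) V(3) x topspace_odometer by simp
    moreover have "\<forall>y\<in>W. (s \<circ> t) y = act (h \<otimes> g) y"
    proof
      fix y assume "y \<in> W"
      then have "y \<in> U" "t y \<in> V" "y \<in> X" unfolding W_def topspace_odometer by auto
      then show "(s \<circ> t) y = act (h \<otimes> g) y" using U(4,5) V(4,5) by (simp add: act_mult)
    qed
    ultimately show "\<exists>U g. openin T U \<and> closedin T U \<and> x \<in> U \<and> g \<in> carrier G \<and> (\<forall>y\<in>U. (s \<circ> t) y = act g y)"
      using U(4) V(4) by blast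
  qed
  then show ?thesis
    using homeomorphic_map_compose[OF ht hs] FG_outside s t unfolding carrier_FG_iff by simp
qed

text \<open>The inverse of \<open>s\<close> acts on the image \<open>s ` U\<close> of each piece \<open>U\<close> of \<open>s\<close> by the inverse
  group element; images of clopen sets are clopen since \<open>s\<close> is a homeomorphism.\<close>

lemma inverse_locally_acting:
  assumes s: "s \<in> carrier FG" and t: "\<And>x. x \<in> X \<Longrightarrow> t x \<in> X \<and> s (t x) = x \<and> t (s x) = x"
  shows "locally_acting t"
  unfolding locally_acting_def
proof
  fix x assume x: "x \<in> X"
  have hs: "homeomorphic_map T T s" using s unfolding carrier_FG_iff by auto
  obtain U g where U: "openin T U" "closedin T U" "t x \<in> U" "g \<in> carrier G" "\<forall>y\<in>U. s y = act g y"
    using FG_locallyE[OF s] t[OF x] by metis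
  have UX: "U \<subseteq> X" using openin_subset[OF U(1)] topspace_odometer by simp
  have "openin T (s ` U)" using homeomorphic_map_openness[OF hs] U(1) UX topspace_odometer by simp
  moreover have "closedin T (s ` U)" using homeomorphic_map_closedness[OF hs] U(2) UX topspace_odometer by simp
  moreover have "x \<in> s ` U" using t[OF x] U(3) by (metis image_eqI)
  moreover have "\<forall>y\<in>s ` U. t y = act (inv g) y"
  proof
    fix y assume "y \<in> s ` U"
    then obtain u where u: "u \<in> U" "y = s u" by blast
    then have "t y = act (inv g) (act g u)" using t act_inv_act U(4) UX by auto
    then show "t y = act (inv g) y" using U(5) u by simp
  qed
  ultimately show "\<exists>U g. openin T U \<and> closedin T U \<and> x \<in> U \<and> g \<in> carrier G \<and> (\<forall>y\<in>U. t y = act g y)"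
    using U(4) by blast
qed

lemma inverse_in_FG:
  assumes s: "s \<in> carrier FG"
  obtains t where "t \<in> carrier FG" "t \<circ> s = id"
proof -
  obtain t0 where t0: "homeomorphic_maps T T s t0"
    using s homeomorphic_map_maps unfolding carrier_FG_iff by blast
  define t where "t x = (if x \<in> X then t0 x else x)" for x
  have maps: "homeomorphic_maps T T s t"
    using homeomorphic_maps_eq[OF t0, of s t] topspace_odometer by (simp add: t_def)
  have inverse: "t x \<in> X \<and> s (t x) = x \<and> t (s x) = x" if "x \<in> X" for x
    using maps that topspace_odometer continuous_map_image_subset_topspace
    unfolding homeomorphic_maps_def by blast
  have "homeomorphic_map T T t" using maps homeomorphic_map_maps homeomorphic_maps_sym by blast
  moreover have "\<forall>x. x \<notin> X \<longrightarrow> t x = x" by (simp add: t_def)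
  moreover have "locally_acting t" by (rule inverse_locally_acting[OF s inverse])
  ultimately have "t \<in> carrier FG" unfolding carrier_FG_iff by blast
  moreover have "(t \<circ> s) x = x" for x
    using inverse FG_outside[OF s, of x] by (cases "x \<in> X") (simp_all add: t_def)
  then have "t \<circ> s = id" by auto
  ultimately show ?thesis using that by blast
qed

lemma group_FG: "group FG"
proof (rule groupI)
  fix s assume "s \<in> carrier FG"
  then show "\<exists>t\<in>carrier FG. t \<otimes>\<^bsub>FG\<^esub> s = \<one>\<^bsub>FG\<^esub>" using inverse_in_FG by (metis mult_FG one_FG)
qed (use id_in_FG comp_in_FG in \<open>simp_all add: o_assoc\<close>)

interpretation FG: group FG by (rule group_FG)

lemma FG_inv_apply:
  assumes "s \<in> carrier FG"
  shows "s ((inv\<^bsub>FG\<^esub> s) x) = x" "(inv\<^bsub>FG\<^esub> s) (s x) = x"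
  using FG.r_inv[OF assms] FG.l_inv[OF assms] by (metis comp_apply id_apply mult_FG one_FG)+


section \<open>Amenability of the topological full group\<close>

definition level_subgroup :: "nat \<Rightarrow> ((nat \<Rightarrow> 'a set) \<Rightarrow> nat \<Rightarrow> 'a set) set" where
  "level_subgroup n = {s \<in> carrier FG. \<forall>x\<in>X. \<exists>g\<in>carrier G. \<forall>y\<in>cylinder n x. s y = act g y}"

lemma level_subgroup_subset: "level_subgroup n \<subseteq> carrier FG"
  unfolding level_subgroup_def by blast

lemma level_subgroupE:
  assumes "s \<in> level_subgroup n" "x \<in> X"
  obtains g where "g \<in> carrier G" "\<forall>y\<in>cylinder n x. s y = act g y"
  using assms unfolding level_subgroup_def by blast

lemma level_subgroups_exhaust:
  assumes "s \<in> carrier FG"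
  shows "\<exists>N. \<forall>n\<ge>N. s \<in> level_subgroup n"
proof -
  obtain N where N: "\<forall>x\<in>X. \<exists>g\<in>carrier G. \<forall>y\<in>cylinder N x. s y = act g y"
    using FG_uniform_level[OF assms] by blast
  have "s \<in> level_subgroup n" if "n \<ge> N" for n
    using assms N cylinder_antimono[OF _ that] unfolding level_subgroup_def by blast
  then show ?thesis by blast
qed

lemma comp_in_level_subgroup:
  assumes s: "s \<in> level_subgroup n" and t: "t \<in> level_subgroup n"
  shows "s \<circ> t \<in> level_subgroup n"
  unfolding level_subgroup_def
proof (intro CollectI conjI ballI)
  show "s \<circ> t \<in> carrier FG" using comp_in_FG level_subgroup_subset s t by blast
  fix x assume x: "x \<in> X"
  obtain g where g: "g \<in> carrier G" "\<forall>y\<in>cylinder n x. t y = act g y"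
    using level_subgroupE[OF t x] by blast
  obtain h where h: "h \<in> carrier G" "\<forall>y\<in>cylinder n (t x). s y = act h y"
    using level_subgroupE[OF s FG_maps_space[OF _ x]] t level_subgroup_subset by blast
  have "(s \<circ> t) y = act (h \<otimes> g) y" if y: "y \<in> cylinder n x" for y
  proof -
    have "t y \<in> cylinder n (t x)" using act_cylinder[OF g(1) y] g(2) y cylinder_self[OF x] by simp
    then show ?thesis using h g y act_mult unfolding cylinder_def by simp
  qed
  then show "\<exists>g\<in>carrier G. \<forall>y\<in>cylinder n x. (s \<circ> t) y = act g y" using g(1) h(1) by blast
qed

lemma inv_in_level_subgroup:
  assumes s: "s \<in> level_subgroup n"
  shows "inv\<^bsub>FG\<^esub> s \<in> level_subgroup n"
  unfolding level_subgroup_def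
proof (intro CollectI conjI ballI)
  have sFG: "s \<in> carrier FG" using s level_subgroup_subset by blast
  show "inv\<^bsub>FG\<^esub> s \<in> carrier FG" using sFG by simp
  fix x assume x: "x \<in> X"
  define z where "z = (inv\<^bsub>FG\<^esub> s) x"
  have z: "z \<in> X" "s z = x" unfolding z_def using FG_maps_space[OF _ x] sFG FG_inv_apply by auto
  obtain g where g: "g \<in> carrier G" "\<forall>y\<in>cylinder n z. s y = act g y"
    using level_subgroupE[OF s z(1)] by blast
  have xz: "act (inv g) x = z" using g cylinder_self[OF z(1)] z act_inv_act by auto
  have "(inv\<^bsub>FG\<^esub> s) y = act (inv g) y" if y: "y \<in> cylinder n x" for y
  proof -
    have "act (inv g) y \<in> cylinder n z" using act_cylinder[OF _ y, of "inv g"] g xz by simp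
    then have "s (act (inv g) y) = y" using g act_act_inv y unfolding cylinder_def by simp
    then show ?thesis using FG_inv_apply(2)[OF sFG] by metis
  qed
  then show "\<exists>g\<in>carrier G. \<forall>y\<in>cylinder n x. (inv\<^bsub>FG\<^esub> s) y = act g y" using g(1) by blast
qed

lemma id_in_level_subgroup: "id \<in> level_subgroup n"
  unfolding level_subgroup_def cylinder_def using id_in_FG act_one by (auto intro!: bexI[of _ \<one>])

lemma subgroup_level_subgroup: "subgroup (level_subgroup n) FG"
proof (rule FG.subgroupI)
  show "level_subgroup n \<noteq> {}" using id_in_level_subgroup by blast
qed (use level_subgroup_subset comp_in_level_subgroup inv_in_level_subgroup in auto)

text \<open>The coset to which an element of \<open>level_subgroup n\<close> moves the points over \<open>C\<close>; it does not
  depend on the chosen point (\<open>coset_action_apply\<close>).\<close>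

definition coset_action :: "nat \<Rightarrow> ((nat \<Rightarrow> 'a set) \<Rightarrow> nat \<Rightarrow> 'a set) \<Rightarrow> 'a set \<Rightarrow> 'a set" where
  "coset_action n s C = s (point_over n C) n"

lemma coset_action_apply:
  assumes s: "s \<in> level_subgroup n" and y: "y \<in> X"
  shows "s y n = coset_action n s (y n)"
proof -
  have yn: "y n \<in> cosets n" using y odometer_space_iff by blast
  have p: "point_over n (y n) \<in> cylinder n y" using point_over[OF yn] unfolding cylinder_def by simp
  obtain g where g: "g \<in> carrier G" "\<forall>z\<in>cylinder n y. s z = act g z" using level_subgroupE[OF s y] by blast
  have "s y n = g <#\<^bsub>G\<^esub> y n" using g cylinder_self[OF y] by (simp add: act_apply)
  also have "\<dots> = g <#\<^bsub>G\<^esub> point_over n (y n) n" using point_over[OF yn] by simp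
  also have "\<dots> = coset_action n s (y n)" unfolding coset_action_def using g p by (simp add: act_apply)
  finally show ?thesis .
qed

lemma coset_action_closed: "s \<in> level_subgroup n \<Longrightarrow> C \<in> cosets n \<Longrightarrow> coset_action n s C \<in> cosets n"
  unfolding coset_action_def using FG_maps_space point_over(1) level_subgroup_subset odometer_space_iff
  by blast

lemma coset_action_comp:
  assumes "s \<in> level_subgroup n" "t \<in> level_subgroup n" "C \<in> cosets n"
  shows "coset_action n (s \<circ> t) C = coset_action n s (coset_action n t C)"
proof -
  have "t (point_over n C) \<in> X"
    using FG_maps_space point_over(1)[OF assms(3)] assms(2) level_subgroup_subset by blast
  then show ?thesis
    unfolding coset_action_def[of n "s \<circ> t"] using coset_action_apply[OF assms(1)]
    by (simp add: coset_action_def)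
qed

lemma coset_action_id: "C \<in> cosets n \<Longrightarrow> coset_action n id C = C"
  unfolding coset_action_def using point_over by simp

definition fixing_subgroup :: "nat \<Rightarrow> 'a set set \<Rightarrow> ((nat \<Rightarrow> 'a set) \<Rightarrow> nat \<Rightarrow> 'a set) set" where
  "fixing_subgroup n D = {s \<in> level_subgroup n. \<forall>y\<in>X. y n \<in> D \<longrightarrow> s y = y}"

lemma fixing_subgroup_subset: "fixing_subgroup n D \<subseteq> level_subgroup n"
  unfolding fixing_subgroup_def by blast

lemma fixing_subgroup_level: "s \<in> fixing_subgroup n D \<Longrightarrow> s \<in> level_subgroup n"
  unfolding fixing_subgroup_def by blast

lemma subgroup_fixing_subgroup: "subgroup (fixing_subgroup n D) FG"
proof (rule FG.subgroupI)
  show "fixing_subgroup n D \<subseteq> carrier FG"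
    using fixing_subgroup_subset level_subgroup_subset by blast
  have "id \<in> fixing_subgroup n D" using id_in_level_subgroup unfolding fixing_subgroup_def by simp
  then show "fixing_subgroup n D \<noteq> {}" by blast
next
  fix s t assume "s \<in> fixing_subgroup n D" "t \<in> fixing_subgroup n D"
  then show "s \<otimes>\<^bsub>FG\<^esub> t \<in> fixing_subgroup n D"
    unfolding fixing_subgroup_def using comp_in_level_subgroup by auto
next
  fix s assume s: "s \<in> fixing_subgroup n D"
  then have "s \<in> carrier FG" using fixing_subgroup_subset level_subgroup_subset by blast
  then have "(inv\<^bsub>FG\<^esub> s) y = y" if "y \<in> X" "y n \<in> D" for y
    using s that FG_inv_apply(2)[of s y] unfolding fixing_subgroup_def by auto
  then show "inv\<^bsub>FG\<^esub> s \<in> fixing_subgroup n D"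
    using s inv_in_level_subgroup unfolding fixing_subgroup_def by blast
qed

lemma fixing_subgroup_cosets: "fixing_subgroup n (cosets n) = {id}"
proof
  show "{id} \<subseteq> fixing_subgroup n (cosets n)"
    using subgroup.one_closed[OF subgroup_fixing_subgroup] by simp
  have "s = id" if s: "s \<in> fixing_subgroup n (cosets n)" for s
  proof
    fix x
    show "s x = id x"
      using s FG_outside[of s x] fixing_subgroup_subset level_subgroup_subset odometer_space_iff
      unfolding fixing_subgroup_def by (cases "x \<in> X") auto
  qed
  then show "fixing_subgroup n (cosets n) \<subseteq> {id}" by blast
qed

lemma fixing_subgroup_empty: "fixing_subgroup n {} = level_subgroup n"
  unfolding fixing_subgroup_def by simp


text \<open>By freeness, the element of \<open>G\<close> by which \<open>s\<close> acts over the coset \<open>C\<close> is unique.\<close>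

definition cocycle :: "nat \<Rightarrow> 'a set \<Rightarrow> ((nat \<Rightarrow> 'a set) \<Rightarrow> nat \<Rightarrow> 'a set) \<Rightarrow> 'a" where
  "cocycle n C s = (THE g. g \<in> carrier G \<and> (\<forall>y\<in>X. y n = C \<longrightarrow> s y = act g y))"

lemma cocycle_unique:
  assumes "s \<in> level_subgroup n" "C \<in> cosets n" "g \<in> carrier G" "\<forall>y\<in>X. y n = C \<longrightarrow> s y = act g y"
  shows "cocycle n C s = g"
proof -
  have unique: "h = g" if "h \<in> carrier G" "\<forall>y\<in>X. y n = C \<longrightarrow> s y = act h y" for h
  proof (rule act_inj[OF that(1) assms(3) point_over(1)[OF assms(2)]])
    have "s (point_over n C) = act h (point_over n C)" "s (point_over n C) = act g (point_over n C)"
      using that(2) assms(4) point_over[OF assms(2)] by blast+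
    then show "act h (point_over n C) = act g (point_over n C)" by simp
  qed
  show ?thesis unfolding cocycle_def
  proof (rule the_equality)
    show "g \<in> carrier G \<and> (\<forall>y\<in>X. y n = C \<longrightarrow> s y = act g y)" using assms(3,4) by blast
  qed (use unique in blast)
qed

lemma cocycle:
  assumes s: "s \<in> level_subgroup n" and C: "C \<in> cosets n"
  shows "cocycle n C s \<in> carrier G" "\<forall>y\<in>X. y n = C \<longrightarrow> s y = act (cocycle n C s) y"
proof -
  obtain g where g: "g \<in> carrier G" "\<forall>y\<in>cylinder n (point_over n C). s y = act g y"
    using level_subgroupE[OF s point_over(1)[OF C]] by blast
  have acts: "\<forall>y\<in>X. y n = C \<longrightarrow> s y = act g y"
    using g(2) point_over(2)[OF C] unfolding cylinder_def by simp
  have "cocycle n C s = g" by (rule cocycle_unique[OF s C g(1) acts])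
  then show "cocycle n C s \<in> carrier G" "\<forall>y\<in>X. y n = C \<longrightarrow> s y = act (cocycle n C s) y"
    using g(1) acts by simp_all
qed

definition coset_stabiliser :: "nat \<Rightarrow> 'a set set \<Rightarrow> 'a set \<Rightarrow> ((nat \<Rightarrow> 'a set) \<Rightarrow> nat \<Rightarrow> 'a set) set" where
  "coset_stabiliser n D C = {s \<in> fixing_subgroup n D. coset_action n s C = C}"

lemma coset_stabiliser_level: "s \<in> coset_stabiliser n D C \<Longrightarrow> s \<in> level_subgroup n"
  unfolding coset_stabiliser_def using fixing_subgroup_subset by blast

lemma subgroup_coset_stabiliser:
  assumes C: "C \<in> cosets n"
  shows "subgroup (coset_stabiliser n D C) FG"
proof (rule FG.subgroupI)
  show "coset_stabiliser n D C \<subseteq> carrier FG"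
    using coset_stabiliser_level level_subgroup_subset by blast
  have "id \<in> coset_stabiliser n D C"
    unfolding coset_stabiliser_def using subgroup.one_closed[OF subgroup_fixing_subgroup] coset_action_id[OF C]
    by simp
  then show "coset_stabiliser n D C \<noteq> {}" by blast
next
  fix s t assume "s \<in> coset_stabiliser n D C" "t \<in> coset_stabiliser n D C"
  then have st: "s \<in> fixing_subgroup n D" "t \<in> fixing_subgroup n D"
    "coset_action n s C = C" "coset_action n t C = C"
    unfolding coset_stabiliser_def by auto
  then have "coset_action n (s \<circ> t) C = C"
    using coset_action_comp[OF _ _ C] fixing_subgroup_subset by (metis subsetD)
  then show "s \<otimes>\<^bsub>FG\<^esub> t \<in> coset_stabiliser n D C"
    using subgroup.m_closed[OF subgroup_fixing_subgroup st(1,2)] unfolding coset_stabiliser_def by simp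
next
  fix s assume s: "s \<in> coset_stabiliser n D C"
  then have sD: "s \<in> fixing_subgroup n D" and sC: "coset_action n s C = C"
    unfolding coset_stabiliser_def by auto
  have s': "inv\<^bsub>FG\<^esub> s \<in> fixing_subgroup n D"
    using subgroup.m_inv_closed[OF subgroup_fixing_subgroup sD] .
  have "s \<in> carrier FG" using sD fixing_subgroup_level level_subgroup_subset by blast
  then have "inv\<^bsub>FG\<^esub> s \<circ> s = id" using FG.l_inv by simp
  have "coset_action n (inv\<^bsub>FG\<^esub> s) C = coset_action n (inv\<^bsub>FG\<^esub> s) (coset_action n s C)"
    using sC by simp
  also have "\<dots> = coset_action n (inv\<^bsub>FG\<^esub> s \<circ> s) C"
    using coset_action_comp[OF fixing_subgroup_level[OF s'] fixing_subgroup_level[OF sD] C] by simp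
  also have "\<dots> = C" using \<open>inv\<^bsub>FG\<^esub> s \<circ> s = id\<close> coset_action_id[OF C] by simp
  finally have "coset_action n (inv\<^bsub>FG\<^esub> s) C = C" .
  then show "inv\<^bsub>FG\<^esub> s \<in> coset_stabiliser n D C" using s' unfolding coset_stabiliser_def by simp
qed

lemma cocycle_comp:
  assumes C: "C \<in> cosets n" and s: "s \<in> coset_stabiliser n D C" and t: "t \<in> coset_stabiliser n D C"
  shows "cocycle n C (s \<circ> t) = cocycle n C s \<otimes> cocycle n C t"
proof (rule cocycle_unique[OF _ C])
  have s': "s \<in> level_subgroup n" and t': "t \<in> level_subgroup n" using s t coset_stabiliser_level by auto
  show "s \<circ> t \<in> level_subgroup n" using comp_in_level_subgroup[OF s' t'] .
  show "cocycle n C s \<otimes> cocycle n C t \<in> carrier G" using cocycle(1)[OF s' C] cocycle(1)[OF t' C] by simp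
  show "\<forall>y\<in>X. y n = C \<longrightarrow> (s \<circ> t) y = act (cocycle n C s \<otimes> cocycle n C t) y"
  proof (intro ballI impI)
    fix y assume y: "y \<in> X" "y n = C"
    have "t y n = C" using coset_action_apply[OF t' y(1)] y(2) t unfolding coset_stabiliser_def by simp
    then have "s (t y) = act (cocycle n C s) (t y)"
      using cocycle(2)[OF s' C] FG_maps_space[OF _ y(1)] t' level_subgroup_subset by blast
    then show "(s \<circ> t) y = act (cocycle n C s \<otimes> cocycle n C t) y"
      using cocycle(2)[OF t' C] y cocycle(1)[OF s' C] cocycle(1)[OF t' C] by (simp add: act_mult)
  qed
qed

lemma group_hom_cocycle:
  assumes C: "C \<in> cosets n"
  shows "group_hom (FG\<lparr>carrier := coset_stabiliser n D C\<rparr>) G (cocycle n C)"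
proof (intro group_hom.intro group_hom_axioms.intro homI)
  show "group (FG\<lparr>carrier := coset_stabiliser n D C\<rparr>)"
    using FG.subgroup_imp_group[OF subgroup_coset_stabiliser[OF C]] .
  show "group G" by (rule is_group)
  fix s t assume "s \<in> carrier (FG\<lparr>carrier := coset_stabiliser n D C\<rparr>)"
    "t \<in> carrier (FG\<lparr>carrier := coset_stabiliser n D C\<rparr>)"
  then show "cocycle n C (s \<otimes>\<^bsub>FG\<lparr>carrier := coset_stabiliser n D C\<rparr>\<^esub> t) = cocycle n C s \<otimes> cocycle n C t"
    using cocycle_comp[OF C] by simp
next
  fix s assume "s \<in> carrier (FG\<lparr>carrier := coset_stabiliser n D C\<rparr>)"
  then show "cocycle n C s \<in> carrier G" using cocycle(1)[OF coset_stabiliser_level C] by simp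
qed

lemma kernel_cocycle:
  assumes C: "C \<in> cosets n"
  shows "kernel (FG\<lparr>carrier := coset_stabiliser n D C\<rparr>) G (cocycle n C) = fixing_subgroup n (insert C D)"
proof (intro equalityI subsetI)
  fix s assume "s \<in> kernel (FG\<lparr>carrier := coset_stabiliser n D C\<rparr>) G (cocycle n C)"
  then have s: "s \<in> coset_stabiliser n D C" "cocycle n C s = \<one>" unfolding kernel_def by auto
  have "s y = y" if "y \<in> X" "y n = C" for y
    using cocycle(2)[OF coset_stabiliser_level[OF s(1)] C] s(2) that act_one by simp
  then show "s \<in> fixing_subgroup n (insert C D)"
    using s(1) unfolding coset_stabiliser_def fixing_subgroup_def by auto
next
  fix s assume s: "s \<in> fixing_subgroup n (insert C D)"
  have fixed: "s y = y" if "y \<in> X" "y n = C" for y using s that unfolding fixing_subgroup_def by auto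
  have "coset_action n s C = C" using fixed point_over[OF C] unfolding coset_action_def by simp
  then have "s \<in> coset_stabiliser n D C" using s unfolding coset_stabiliser_def fixing_subgroup_def by auto
  moreover have "cocycle n C s = \<one>"
  proof (rule cocycle_unique[OF _ C one_closed])
    show "s \<in> level_subgroup n" using s fixing_subgroup_subset by blast
    show "\<forall>y\<in>X. y n = C \<longrightarrow> s y = act \<one> y" using fixed act_one by simp
  qed
  ultimately show "s \<in> kernel (FG\<lparr>carrier := coset_stabiliser n D C\<rparr>) G (cocycle n C)"
    unfolding kernel_def by simp
qed

lemma amenable_coset_stabiliser:
  assumes "amenable G" "C \<in> cosets n" "amenable (FG\<lparr>carrier := fixing_subgroup n (insert C D)\<rparr>)"
  shows "amenable (FG\<lparr>carrier := coset_stabiliser n D C\<rparr>)"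
proof (rule amenable_extension[OF group_hom_cocycle[OF assms(2)]])
  show "amenable (G\<lparr>carrier := cocycle n C ` carrier (FG\<lparr>carrier := coset_stabiliser n D C\<rparr>)\<rparr>)"
    by (rule amenable_subgroup[OF is_group group_hom.img_is_subgroup[OF group_hom_cocycle[OF assms(2)]]
          assms(1)])
qed (use assms(3) kernel_cocycle[OF assms(2)] in simp)

lemma amenable_fixing_subgroup_step:
  assumes C: "C \<in> cosets n" and amenable: "amenable (FG\<lparr>carrier := coset_stabiliser n D C\<rparr>)"
  shows "amenable (FG\<lparr>carrier := fixing_subgroup n D\<rparr>)"
proof (rule amenable_if_finite_orbit[where act = "coset_action n" and Z = "cosets n" and z = C])
  show "group (FG\<lparr>carrier := fixing_subgroup n D\<rparr>)"
    using FG.subgroup_imp_group[OF subgroup_fixing_subgroup] .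
  show "finite ((\<lambda>h. coset_action n h C) ` carrier (FG\<lparr>carrier := fixing_subgroup n D\<rparr>))"
  proof (rule finite_subset[OF _ finite_cosets])
    show "(\<lambda>h. coset_action n h C) ` carrier (FG\<lparr>carrier := fixing_subgroup n D\<rparr>) \<subseteq> cosets n"
      using coset_action_closed[OF _ C] fixing_subgroup_subset by auto
  qed
  show "amenable (FG\<lparr>carrier := fixing_subgroup n D\<rparr>\<lparr>carrier :=
      {h \<in> carrier (FG\<lparr>carrier := fixing_subgroup n D\<rparr>). coset_action n h C = C}\<rparr>)"
    using amenable unfolding coset_stabiliser_def by simp
qed (use C fixing_subgroup_level coset_action_closed coset_action_comp coset_action_id in auto)

text \<open>Induction on the set \<open>E\<close> of cosets over which the elements are not required to be trivial.\<close>

lemma amenable_fixing_subgroup: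
  assumes "amenable G" "finite E" "E \<subseteq> cosets n"
  shows "amenable (FG\<lparr>carrier := fixing_subgroup n (cosets n - E)\<rparr>)"
  using assms(2,3)
proof (induction E rule: finite_subset_induct')
  case empty
  then show ?case
    using amenable_trivial[of "FG\<lparr>carrier := {id}\<rparr>" id] fixing_subgroup_cosets by simp
next
  case (insert C E)
  have "insert C (cosets n - insert C E) = cosets n - E" using insert.hyps(2,4) by blast
  then have "amenable (FG\<lparr>carrier := fixing_subgroup n (insert C (cosets n - insert C E))\<rparr>)"
    using insert.IH by (simp only:)
  then show ?case
    using amenable_fixing_subgroup_step[OF insert.hyps(2) amenable_coset_stabiliser[OF assms(1) insert.hyps(2)]]
    by simp
qed

lemma amenable_level_subgroup: "amenable G \<Longrightarrow> amenable (FG\<lparr>carrier := level_subgroup n\<rparr>)"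
  using amenable_fixing_subgroup[OF _ finite_cosets subset_refl] fixing_subgroup_empty by simp

lemma amenable_FG_if_amenable: "amenable G \<Longrightarrow> amenable FG"
  by (rule amenable_exhaustion[OF group_FG subgroup_level_subgroup amenable_level_subgroup
        level_subgroups_exhaust])

definition translation :: "'a \<Rightarrow> (nat \<Rightarrow> 'a set) \<Rightarrow> nat \<Rightarrow> 'a set" where
  "translation g x = (if x \<in> X then act g x else x)"

lemma translation_in_FG:
  assumes g: "g \<in> carrier G"
  shows "translation g \<in> carrier FG"
proof -
  have continuous: "continuous_map T T (translation h)" if "h \<in> carrier G" for h
    using continuous_map_eq[OF continuous_map_act[OF that]] topspace_odometer unfolding translation_def by simp
  have "homeomorphic_maps T T (translation g) (translation (inv g))"
    unfolding homeomorphic_maps_def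
    using continuous[OF g] continuous[OF inv_closed[OF g]] g topspace_odometer act_closed act_inv_act act_act_inv
    by (simp add: translation_def)
  then have "homeomorphic_map T T (translation g)" using homeomorphic_map_maps by blast
  moreover have "locally_acting (translation g)"
    unfolding locally_acting_def
  proof
    fix x assume "x \<in> X"
    then show "\<exists>U h. openin T U \<and> closedin T U \<and> x \<in> U \<and> h \<in> carrier G \<and>
        (\<forall>y\<in>U. translation g y = act h y)"
      using g openin_topspace[of T] closedin_topspace[of T] unfolding topspace_odometer
      by (intro exI[of _ X] exI[of _ g]) (simp add: translation_def)
  qed
  ultimately show ?thesis unfolding carrier_FG_iff by (simp add: translation_def)
qed

lemma translation_hom: "translation \<in> hom G FG"
proof (rule homI)
  fix g h assume "g \<in> carrier G" "h \<in> carrier G"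
  then have "translation (g \<otimes> h) x = (translation g \<circ> translation h) x" for x
    using act_closed act_mult by (simp add: translation_def)
  then show "translation (g \<otimes> h) = translation g \<otimes>\<^bsub>FG\<^esub> translation h" by auto
qed (rule translation_in_FG)

lemma inj_on_translation: "inj_on translation (carrier G)"
proof
  fix g h assume "g \<in> carrier G" "h \<in> carrier G" "translation g = translation h"
  then have "act g Gs = act h Gs" using Gs_in_space unfolding translation_def by (metis (no_types))
  then show "g = h" using act_inj Gs_in_space \<open>g \<in> carrier G\<close> \<open>h \<in> carrier G\<close> by blast
qed

theorem amenable_FG_iff: "amenable FG \<longleftrightarrow> amenable G"
  using amenable_inj_hom[OF is_group group_FG translation_hom inj_on_translation] amenable_FG_if_amenable
  by (rule iffI)

end

theorem corollary4p6:
  fixes G :: "('a, 'b) monoid_scheme" and Gs :: "nat \<Rightarrow> 'a set"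
  assumes "group G"
    and "countable (carrier G)"
    and "\<And>n. Gs n \<lhd> G"
    and "\<And>n. finite (rcosets\<^bsub>G\<^esub> (Gs n))"
    and "\<And>n. Gs (Suc n) \<subseteq> Gs n"
    and free: "\<And>g x. g \<in> carrier G \<Longrightarrow> x \<in> odometer_space G Gs \<Longrightarrow>
                 odometer_action G g x = x \<Longrightarrow> g = \<one>\<^bsub>G\<^esub>"
  shows "amenable (topological_full_group G Gs) \<longleftrightarrow> amenable G"
proof -
  interpret free_odometer G Gs
    using assms(1,3-5) free by (intro free_odometer.intro free_odometer_axioms.intro) auto
  show ?thesis by (rule amenable_FG_iff)
qed

end
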